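(* Let $(J,R,\sigma)$ be a generalized complex structure of type $1$ on a real $4$-dimensional unimodular Lie algebra $\mathfrak g$. Then there exist a basis $(e_1,e_2,e_3,e_4)$ of $\mathfrak g$ and $\lambda\in\mathbb R$ such that $J=\lambda(E_{11}+E_{22})+E_{34}-E_{43}$, $R=e_{12}^\#$, $\sigma=(1+\lambda^2)e^{12}_\#$, and the nonvanishing Lie brackets have one of the following forms (all parameters real): $\mathfrak U_1$: $[e_1,e_2]=e_1$, $[e_2,e_3]=\tfrac12e_3-ye_4-q_1e_1$, $[e_2,e_4]=ye_3+\tfrac12e_4-q_2e_1$; $\mathfrak U_2$: $[e_3,e_4]=b_1e_1+b_2e_2$, $[e_2,e_3]=-ye_4-q_1e_1$, $[e_2,e_4]=ye_3-q_2e_1$; $\mathfrak U_3$: $[e_3,e_4]=b_1e_1+b_2e_2$, $[e_4,e_1]=pe_1+re_2$, $[e_4,e_2]=qe_1-pe_2$, with $|p^2+qr|\in\{0,1\}$.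
   Context: Let $\mathfrak g$ be a real finite-dimensional Lie algebra, $\Phi(\mathfrak g)=\mathfrak g\oplus\mathfrak g^*$ with the neutral pairing $\langle u+\alpha,v+\beta\rangle=\tfrac12(\alpha(v)+\beta(u))$ and the bracket $[u+\alpha,v+\beta]=[u,v]+\mathrm{ad}_u^t\beta-\mathrm{ad}_v^t\alpha$, where $(\mathrm{ad}_u^t\alpha)(v)=-\alpha([u,v])$. A generalized complex structure on $\mathfrak g$ is an endomorphism $K$ of $\Phi(\mathfrak g)$ with $K^2=-\mathrm{Id}$, $\langle Ka,b\rangle+\langle a,Kb\rangle=0$ for all $a,b$, and vanishing Nijenhuis torsion $N_K(a,b)=[Ka,Kb]-K[Ka,b]-K[a,Kb]+K^2[a,b]$. Writing $K=\begin{pmatrix}J&R\\ \sigma&-J^*\end{pmatrix}$ with skew-symmetric $R:\mathfrak g^*\to\mathfrak g$, $\sigma:\mathfrak g\to\mathfrak g^*$, the triple $(J,R,\sigma)$ is called a generalized complex structure on $\mathfrak g$; in dimension 4 it is of type $1$ if $\operatorname{rank}R=2$. A Lie algebra is unimodular if $\operatorname{tr}\mathrm{ad}_u=0$ for all $u$. Notation: $E_{ij}$ sends $e_j$ to $e_i$ and kills $e_k$, $k\neq j$; for $\pi\in\wedge^2\mathfrak g$, $\pi^\#:\mathfrak g^*\to\mathfrak g$ is $\beta(\pi^\#\alpha)=\pi(\alpha,\beta)$; for $\omega\in\wedge^2\mathfrak g^*$, $\omega_\#(u)=i_u\omega$; $e_{12}^\#=(e_1\wedge e_2)^\#$, $e^{12}_\#=(e^1\wedge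 e^2)_\#$ with $(e^i)$ the dual basis. *)

theory Defs
  imports "HOL-Analysis.Analysis"
begin

definition lie_algebra :: "('a::real_vector \<Rightarrow> 'a \<Rightarrow> 'a) \<Rightarrow> bool" where
  "lie_algebra br \<longleftrightarrow> bilinear br \<and> (\<forall>u. br u u = 0) \<and>
     (\<forall>u v w. br u (br v w) + br v (br w u) + br w (br u v) = 0)"

definition lin_trace :: "('a::euclidean_space \<Rightarrow> 'a) \<Rightarrow> real" where
  "lin_trace f = (\<Sum>b\<in>Basis. f b \<bullet> b)"

definition unimodular :: "('a::euclidean_space \<Rightarrow> 'a \<Rightarrow> 'a) \<Rightarrow> bool" where
  "unimodular br \<longleftrightarrow> (\<forall>u. lin_trace (br u) = 0)"

definition dual_space :: "('a::real_vector \<Rightarrow> real) set" where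
  "dual_space = {\<alpha>. linear \<alpha>}"

definition Phi :: "('a::real_vector \<times> ('a \<Rightarrow> real)) set" where
  "Phi = UNIV \<times> dual_space"

definition phi_pair :: "('a \<times> ('a \<Rightarrow> real)) \<Rightarrow> ('a \<times> ('a \<Rightarrow> real)) \<Rightarrow> real" where
  "phi_pair a b = (snd a (fst b) + snd b (fst a)) / 2"

definition ad_t :: "('a \<Rightarrow> 'a \<Rightarrow> 'a) \<Rightarrow> 'a \<Rightarrow> ('a \<Rightarrow> real) \<Rightarrow> ('a \<Rightarrow> real)" where
  "ad_t br u \<alpha> = (\<lambda>v. - \<alpha> (br u v))"

definition phi_bracket :: "('a::real_vector \<Rightarrow> 'a \<Rightarrow> 'a) \<Rightarrow> ('a \<times> ('a \<Rightarrow> real)) \<Rightarrow> ('a \<times> ('a \<Rightarrow> real)) \<Rightarrow> ('a \<times> ('a \<Rightarrow> real))" where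
  "phi_bracket br a b = (br (fst a) (fst b),
      \<lambda>w. ad_t br (fst a) (snd b) w - ad_t br (fst b) (snd a) w)"

text \<open>K = [[J, R], [sigma, -J^*]] acting on u + alpha.\<close>
definition gc_K :: "('a::real_vector \<Rightarrow> 'a) \<Rightarrow> (('a \<Rightarrow> real) \<Rightarrow> 'a) \<Rightarrow> ('a \<Rightarrow> ('a \<Rightarrow> real))
    \<Rightarrow> ('a \<times> ('a \<Rightarrow> real)) \<Rightarrow> ('a \<times> ('a \<Rightarrow> real))" where
  "gc_K J R \<sigma> a = (J (fst a) + R (snd a), \<lambda>w. \<sigma> (fst a) w - snd a (J w))"

definition nijenhuis :: "('a::real_vector \<Rightarrow> 'a \<Rightarrow> 'a) \<Rightarrow> (('a \<times> ('a \<Rightarrow> real)) \<Rightarrow> ('a \<times> ('a \<Rightarrow> real)))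
    \<Rightarrow> ('a \<times> ('a \<Rightarrow> real)) \<Rightarrow> ('a \<times> ('a \<Rightarrow> real)) \<Rightarrow> ('a \<times> ('a \<Rightarrow> real))" where
  "nijenhuis br K a b =
     (let x1 = phi_bracket br (K a) (K b);
          x2 = K (phi_bracket br (K a) b);
          x3 = K (phi_bracket br a (K b));
          x4 = K (K (phi_bracket br a b))
      in (fst x1 - fst x2 - fst x3 + fst x4, \<lambda>w. snd x1 w - snd x2 w - snd x3 w + snd x4 w))"

definition gen_complex_structure ::
  "('a::real_vector \<Rightarrow> 'a \<Rightarrow> 'a) \<Rightarrow> ('a \<Rightarrow> 'a) \<Rightarrow> (('a \<Rightarrow> real) \<Rightarrow> 'a) \<Rightarrow> ('a \<Rightarrow> ('a \<Rightarrow> real)) \<Rightarrow> bool" where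
  "gen_complex_structure br J R \<sigma> \<longleftrightarrow>
     linear J \<and>
     (\<forall>\<alpha>\<in>dual_space. \<forall>\<beta>\<in>dual_space. \<forall>s t::real.
        R (\<lambda>w. s * \<alpha> w + t * \<beta> w) = s *\<^sub>R R \<alpha> + t *\<^sub>R R \<beta>) \<and>
     (\<forall>u. \<sigma> u \<in> dual_space) \<and>
     (\<forall>u v. \<forall>s t::real. \<sigma> (s *\<^sub>R u + t *\<^sub>R v) = (\<lambda>w. s * \<sigma> u w + t * \<sigma> v w)) \<and>
     (\<forall>\<alpha>\<in>dual_space. \<forall>\<beta>\<in>dual_space. \<beta> (R \<alpha>) = - \<alpha> (R \<beta>)) \<and>
     (\<forall>u v. \<sigma> u v = - \<sigma> v u) \<and>
     (\<forall>a\<in>Phi. gc_K J R \<sigma> (gc_K J R \<sigma> a) = (- fst a, \<lambda>w. - snd a w)) \<and>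
     (\<forall>a\<in>Phi. \<forall>b\<in>Phi. phi_pair (gc_K J R \<sigma> a) b + phi_pair a (gc_K J R \<sigma> b) = 0) \<and>
     (\<forall>a\<in>Phi. \<forall>b\<in>Phi. nijenhuis br (gc_K J R \<sigma>) a b = (0, \<lambda>w. 0))"

definition rank_R :: "(('a::real_vector \<Rightarrow> real) \<Rightarrow> 'a) \<Rightarrow> nat" where
  "rank_R R = dim (R ` dual_space)"

end

theory Submission
  imports Defs
begin

text \<open>
  Normalise the rank-two skew map \<open>R\<close> to \<open>e\<^sub>1 \<and> e\<^sub>2\<close>, with \<open>V = \<langle>e\<^sub>1, e\<^sub>2\<rangle>\<close> its image.
  The identity \<open>K\<^sup>2 = -1\<close> says that \<open>J\<close> commutes with \<open>R\<close>, so \<open>J\<close> is a scalar \<open>\<lambda>\<close> on \<open>V\<close>, and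
  that \<open>J\<^sup>2 + R \<sigma> = -1\<close>, so \<open>J\<^sup>2 = -1\<close> on a \<open>J\<close>-invariant complement \<open>W = \<langle>e\<^sub>3, e\<^sub>4\<rangle>\<close>;
  it then also forces \<open>\<sigma> = (1 + \<lambda>\<^sup>2) e\<^sup>1\<^sup>2\<close>.
  Vanishing of the Nijenhuis tensor on pairs of coordinate 1-forms, together with
  unimodularity, puts the brackets in a normal form with \<open>[V, V] \<subseteq> V\<close> and \<open>[W, W] \<subseteq> V\<close>,
  in which \<open>ad V\<close> acts on \<open>W\<close> by a trace-free part and a rotation \<open>(\<theta>\<^sub>1, \<theta>\<^sub>2)\<close>.
  The Jacobi identity then yields the three cases.
  If \<open>[V, V] \<noteq> 0\<close>, a unimodular change of basis of \<open>V\<close> gives \<open>[f\<^sub>1, f\<^sub>2] = f\<^sub>1\<close> and \<open>U\<^sub>1\<close>.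
  If \<open>V\<close> is abelian and \<open>\<theta> \<noteq> 0\<close>, one chooses \<open>f\<^sub>1\<close> with \<open>\<theta>(f\<^sub>1) = 0\<close> and normalises \<open>\<theta>(f\<^sub>2) = 1\<close>: \<open>U\<^sub>2\<close>.
  Otherwise \<open>ad V\<close> maps \<open>W\<close> into \<open>V\<close>; Jacobi makes the relevant coefficient vectors parallel,
  so a rotation of \<open>W\<close> makes \<open>f\<^sub>3\<close> central in \<open>V + \<langle>f\<^sub>3\<rangle>\<close>, and a rescaling of \<open>W\<close> normalises
  \<open>\<bar>p\<^sup>2 + q r\<bar>\<close>: \<open>U\<^sub>3\<close>.
\<close>

section \<open>Frames and coordinates\<close>

lemma linear_eqs:
  assumes "linear f"
  shows "f (x + y) = f x + f y" "f (x - y) = f x - f y" "f (c *\<^sub>R x) = c *\<^sub>R f x"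
    "f (- x) = - f x" "f 0 = 0"
  using assms by (simp_all add: linear_add linear_diff linear_scale linear_neg linear_0)

lemma one_plus_square_neq_0: "1 + x\<^sup>2 \<noteq> (0::real)"
  using add_pos_nonneg[OF zero_less_one zero_le_power2[of x]] by simp

lemma linear_inner_right: "linear (\<lambda>w. x \<bullet> (w::'a::real_inner))"
  by (simp add: bounded_linear.linear bounded_linear_inner_right)

lemma linear_functional_inner:
  fixes \<alpha> :: "'a::euclidean_space \<Rightarrow> real"
  assumes "linear \<alpha>"
  shows "\<alpha> w = adjoint \<alpha> 1 \<bullet> w"
  using adjoint_works[OF assms, of w 1] by (simp add: inner_commute)

definition independent4 :: "'a::real_vector \<Rightarrow> 'a \<Rightarrow> 'a \<Rightarrow> 'a \<Rightarrow> bool" where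
  "independent4 e1 e2 e3 e4 \<longleftrightarrow>
     (\<forall>x1 x2 x3 x4. x1 *\<^sub>R e1 + x2 *\<^sub>R e2 + x3 *\<^sub>R e3 + x4 *\<^sub>R e4 = 0
        \<longrightarrow> x1 = 0 \<and> x2 = 0 \<and> x3 = 0 \<and> x4 = 0)"

lemma independent4D:
  assumes "independent4 e1 e2 e3 e4" "x1 *\<^sub>R e1 + x2 *\<^sub>R e2 + x3 *\<^sub>R e3 + x4 *\<^sub>R e4 = 0"
  shows "x1 = 0" "x2 = 0" "x3 = 0" "x4 = 0"
  using assms unfolding independent4_def by blast+

lemma independent4_distinct:
  assumes "independent4 e1 e2 e3 e4"
  shows "distinct [e1, e2, e3, e4]"
  using independent4D(1)[OF assms, of 1 "-1" 0 0] independent4D(1)[OF assms, of 1 0 "-1" 0]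
    independent4D(1)[OF assms, of 1 0 0 "-1"] independent4D(2)[OF assms, of 0 1 "-1" 0]
    independent4D(2)[OF assms, of 0 1 0 "-1"] independent4D(3)[OF assms, of 0 0 1 "-1"]
  by auto

lemma independent4_independent:
  assumes "independent4 e1 e2 e3 e4"
  shows "independent {e1, e2, e3, e4}"
proof (rule independent_if_scalars_zero)
  fix f :: "'a \<Rightarrow> real" and x
  assume "(\<Sum>v\<in>{e1, e2, e3, e4}. f v *\<^sub>R v) = 0" and "x \<in> {e1, e2, e3, e4}"
  moreover have "(\<Sum>v\<in>{e1, e2, e3, e4}. f v *\<^sub>R v) = f e1 *\<^sub>R e1 + f e2 *\<^sub>R e2 + f e3 *\<^sub>R e3 + f e4 *\<^sub>R e4"
    using independent4_distinct[OF assms] by (simp add: add.assoc)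
  ultimately show "f x = 0"
    using independent4D[OF assms] by auto
qed simp

lemma independent4_span_UNIV:
  fixes e1 :: "'a::euclidean_space"
  assumes "DIM('a) = 4" and "independent4 e1 e2 e3 e4"
  shows "span {e1, e2, e3, e4} = UNIV"
proof -
  have "card {e1, e2, e3, e4} = dim (UNIV :: 'a set)"
    using independent4_distinct[OF assms(2)] assms(1) by simp
  then show ?thesis
    using card_eq_dim[of "{e1, e2, e3, e4}" UNIV] independent4_independent[OF assms(2)] by auto
qed

locale coordinates4 =
  fixes e1 e2 e3 e4 :: "'a::euclidean_space" and d1 d2 d3 d4 :: "'a \<Rightarrow> real"
  assumes linear_coord: "linear d1" "linear d2" "linear d3" "linear d4"
    and coord_frame [simp]:
      "d1 e1 = 1" "d1 e2 = 0" "d1 e3 = 0" "d1 e4 = 0"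
      "d2 e1 = 0" "d2 e2 = 1" "d2 e3 = 0" "d2 e4 = 0"
      "d3 e1 = 0" "d3 e2 = 0" "d3 e3 = 1" "d3 e4 = 0"
      "d4 e1 = 0" "d4 e2 = 0" "d4 e3 = 0" "d4 e4 = 1"
    and expansion: "x = d1 x *\<^sub>R e1 + d2 x *\<^sub>R e2 + d3 x *\<^sub>R e3 + d4 x *\<^sub>R e4"
begin

lemmas coord_eqs [simp] =
  linear_eqs[OF linear_coord(1)] linear_eqs[OF linear_coord(2)]
  linear_eqs[OF linear_coord(3)] linear_eqs[OF linear_coord(4)]

lemma lin_trace_eq:
  assumes "linear f"
  shows "lin_trace f = d1 (f e1) + d2 (f e2) + d3 (f e3) + d4 (f e4)"
proof -
  have sum_coord: "(\<Sum>b\<in>Basis. d b * (v \<bullet> b)) = d v" if "linear d" for d :: "'a \<Rightarrow> real" and v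
  proof -
    have "d v = d (\<Sum>b\<in>Basis. (v \<bullet> b) *\<^sub>R b)" by (simp add: euclidean_representation)
    also have "\<dots> = (\<Sum>b\<in>Basis. (v \<bullet> b) * d b)" using that by (simp add: linear_sum linear_scale)
    finally show ?thesis by (simp add: mult.commute)
  qed
  have "f b \<bullet> b = d1 b * (f e1 \<bullet> b) + d2 b * (f e2 \<bullet> b) + d3 b * (f e3 \<bullet> b) + d4 b * (f e4 \<bullet> b)" for b
    by (subst expansion[of b]) (simp add: linear_eqs[OF assms] inner_add_left)
  then show ?thesis
    unfolding lin_trace_def by (simp add: sum.distrib sum_coord linear_coord)
qed

end

lemma independent4_coordinates:
  fixes e1 :: "'a::euclidean_space"
  assumes dim: "DIM('a) = 4" and ind: "independent4 e1 e2 e3 e4"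
  obtains d1 d2 d3 d4 where "coordinates4 e1 e2 e3 e4 d1 d2 d3 d4"
proof -
  let ?E = "{e1, e2, e3, e4}"
  have dual: "\<exists>d. linear d \<and> (\<forall>x\<in>?E. d x = (if x = v then 1 else (0::real)))" for v
    using linear_independent_extend[OF independent4_independent[OF ind],
        of "\<lambda>x. if x = v then 1 else 0"] by simp
  obtain d1 d2 d3 d4 :: "'a \<Rightarrow> real" where
    d1: "linear d1" "\<forall>x\<in>?E. d1 x = (if x = e1 then 1 else 0)" and
    d2: "linear d2" "\<forall>x\<in>?E. d2 x = (if x = e2 then 1 else 0)" and
    d3: "linear d3" "\<forall>x\<in>?E. d3 x = (if x = e3 then 1 else 0)" and
    d4: "linear d4" "\<forall>x\<in>?E. d4 x = (if x = e4 then 1 else 0)"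
    using dual[of e1] dual[of e2] dual[of e3] dual[of e4] by blast
  have dist: "distinct [e1, e2, e3, e4]" by (rule independent4_distinct[OF ind])
  define g where "g x = d1 x *\<^sub>R e1 + d2 x *\<^sub>R e2 + d3 x *\<^sub>R e3 + d4 x *\<^sub>R e4" for x
  have "linear g"
    unfolding g_def using d1(1) d2(1) d3(1) d4(1)
    by (intro linearI) (simp_all add: linear_eqs scaleR_add_left scaleR_add_right)
  have id_eq_g: "id x = g x" for x
  proof (rule linear_eq_on[OF linear_id \<open>linear g\<close>])
    show "x \<in> span ?E" using independent4_span_UNIV[OF dim ind] by simp
    show "id b = g b" if "b \<in> ?E" for b
      using that dist d1(2) d2(2) d3(2) d4(2) by (auto simp: g_def)
  qed
  have expansion: "x = d1 x *\<^sub>R e1 + d2 x *\<^sub>R e2 + d3 x *\<^sub>R e3 + d4 x *\<^sub>R e4" for x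
    using id_eq_g[of x] by (simp only: id_apply g_def)
  have c1: "d1 e1 = 1" "d1 e2 = 0" "d1 e3 = 0" "d1 e4 = 0" using dist d1(2) by auto
  have c2: "d2 e1 = 0" "d2 e2 = 1" "d2 e3 = 0" "d2 e4 = 0" using dist d2(2) by auto
  have c3: "d3 e1 = 0" "d3 e2 = 0" "d3 e3 = 1" "d3 e4 = 0" using dist d3(2) by auto
  have c4: "d4 e1 = 0" "d4 e2 = 0" "d4 e3 = 0" "d4 e4 = 1" using dist d4(2) by auto
  show ?thesis
    by (rule that, rule coordinates4.intro[OF d1(1) d2(1) d3(1) d4(1) c1 c2 c3 c4 expansion])
qed

section \<open>Generalized complex structures\<close>

lemma gcs_linear_J:
  "gen_complex_structure br J R \<sigma> \<Longrightarrow> linear J"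
  unfolding gen_complex_structure_def by blast

lemma gcs_R_combination:
  "gen_complex_structure br J R \<sigma> \<Longrightarrow> linear \<alpha> \<Longrightarrow> linear \<beta> \<Longrightarrow>
    R (\<lambda>w. s * \<alpha> w + t * \<beta> w) = s *\<^sub>R R \<alpha> + t *\<^sub>R R \<beta>"
  unfolding gen_complex_structure_def dual_space_def by blast

lemma gcs_linear_sigma:
  "gen_complex_structure br J R \<sigma> \<Longrightarrow> linear (\<sigma> u)"
  unfolding gen_complex_structure_def dual_space_def by blast

lemma gcs_sigma_combination:
  "gen_complex_structure br J R \<sigma> \<Longrightarrow>
    \<sigma> (s *\<^sub>R u + t *\<^sub>R v) = (\<lambda>w. s * \<sigma> u w + t * \<sigma> v w)"
  unfolding gen_complex_structure_def by blast

lemma gcs_R_skew: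
  "gen_complex_structure br J R \<sigma> \<Longrightarrow> linear \<alpha> \<Longrightarrow> linear \<beta> \<Longrightarrow> \<beta> (R \<alpha>) = - \<alpha> (R \<beta>)"
  unfolding gen_complex_structure_def dual_space_def by blast

lemma gcs_sigma_skew:
  "gen_complex_structure br J R \<sigma> \<Longrightarrow> \<sigma> u v = - \<sigma> v u"
  unfolding gen_complex_structure_def by blast

lemma gcs_R_zero:
  "gen_complex_structure br J R \<sigma> \<Longrightarrow> R (\<lambda>w. 0) = 0"
  using gcs_R_combination[of br J R \<sigma> "\<lambda>w. 0" "\<lambda>w. 0" 0 0] by (simp add: linear_zero)

lemma gcs_R_uminus:
  "gen_complex_structure br J R \<sigma> \<Longrightarrow> linear \<alpha> \<Longrightarrow> R (\<lambda>w. - \<alpha> w) = - R \<alpha>"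
  using gcs_R_combination[of br J R \<sigma> \<alpha> "\<lambda>w. 0" "-1" 0] by (simp add: linear_zero)

lemma gcs_sigma_zero:
  "gen_complex_structure br J R \<sigma> \<Longrightarrow> \<sigma> 0 = (\<lambda>w. 0)"
  using gcs_sigma_combination[of br J R \<sigma> 0 0 0 0] by simp

lemma gcs_K_square:
  assumes "gen_complex_structure br J R \<sigma>" and "linear \<alpha>"
  shows "gc_K J R \<sigma> (gc_K J R \<sigma> (u, \<alpha>)) = (- u, \<lambda>w. - \<alpha> w)"
proof -
  have "\<forall>a\<in>Phi. gc_K J R \<sigma> (gc_K J R \<sigma> a) = (- fst a, \<lambda>w. - snd a w)"
    using assms(1) unfolding gen_complex_structure_def by blast
  moreover have "(u, \<alpha>) \<in> Phi" using assms(2) by (simp add: Phi_def dual_space_def)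
  ultimately show ?thesis by fastforce
qed

lemma gcs_J_square:
  assumes "gen_complex_structure br J R \<sigma>"
  shows "J (J u) + R (\<sigma> u) = - u"
  using gcs_K_square[OF assms linear_zero, of u] by (simp add: gc_K_def gcs_R_zero[OF assms])

lemma gcs_sigma_J:
  assumes "gen_complex_structure br J R \<sigma>"
  shows "\<sigma> (J u) w = \<sigma> u (J w)"
proof -
  have "(\<lambda>w. \<sigma> (J u) w - \<sigma> u (J w)) = (\<lambda>w. 0)"
    using gcs_K_square[OF assms linear_zero, of u] by (simp add: gc_K_def gcs_R_zero[OF assms])
  then show ?thesis by (metis right_minus_eq)
qed

lemma gcs_J_R:
  assumes gcs: "gen_complex_structure br J R \<sigma>" and "linear \<alpha>"
  shows "J (R \<alpha>) = R (\<lambda>w. \<alpha> (J w))"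
proof -
  have "linear (\<lambda>w. \<alpha> (J w))"
    using linear_compose[OF gcs_linear_J[OF gcs] \<open>linear \<alpha>\<close>] by (simp add: o_def)
  moreover have "J (R \<alpha>) + R (\<lambda>w. - \<alpha> (J w)) = 0"
    using gcs_K_square[OF gcs \<open>linear \<alpha>\<close>, of 0]
    by (simp add: gc_K_def gcs_sigma_zero[OF gcs] linear_0[OF gcs_linear_J[OF gcs]])
  ultimately show ?thesis by (simp add: gcs_R_uminus[OF gcs])
qed

lemma in_span_pair_iff: "v \<in> span {a, b} \<longleftrightarrow> (\<exists>x y. v = x *\<^sub>R a + y *\<^sub>R b)"
proof
  assume "v \<in> span {a, b}"
  then obtain x where "v - x *\<^sub>R a \<in> span {b}" by (auto simp: span_insert)
  then obtain y where "v - x *\<^sub>R a = y *\<^sub>R b" by (auto simp: span_singleton)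
  then show "\<exists>x y. v = x *\<^sub>R a + y *\<^sub>R b" by (metis add.commute diff_eq_eq)
qed (auto intro: span_add span_scale span_base)

lemma skew_rank2_normal_form:
  fixes r :: "'a::euclidean_space \<Rightarrow> 'a"
  assumes lin: "linear r" and skew: "\<And>x y. y \<bullet> r x = - (x \<bullet> r y)" and rank: "dim (range r) = 2"
  obtains e1 e2 where "e1 \<bullet> e1 = 1" "e2 \<bullet> e1 = 0" "e2 \<noteq> 0"
    "\<And>x. r x = (x \<bullet> e1) *\<^sub>R e2 - (x \<bullet> e2) *\<^sub>R e1"
proof -
  obtain B where B: "B \<subseteq> range r" "pairwise orthogonal B" "\<And>x. x \<in> B \<Longrightarrow> norm x = 1"
      "card B = dim (range r)" "span B = range r"
    using orthonormal_basis_subspace[of "range r"] lin by (metis linear_subspace_image subspace_UNIV)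
  obtain f1 f2 where f12: "B = {f1, f2}" "f1 \<noteq> f2" using B(4) rank card_2_iff by metis
  have f1f2: "f1 \<bullet> f2 = 0" "f2 \<bullet> f1 = 0" "f1 \<bullet> f1 = 1" "f2 \<bullet> f2 = 1"
    using B(2,3) f12 by (auto simp: pairwise_def orthogonal_def norm_eq_1 inner_commute)
  have in_range: "v = (v \<bullet> f1) *\<^sub>R f1 + (v \<bullet> f2) *\<^sub>R f2" if "v \<in> range r" for v
  proof -
    have "v \<in> span {f1, f2}" using that B(5) f12 by simp
    then obtain k1 k2 where v: "v = k1 *\<^sub>R f1 + k2 *\<^sub>R f2"
      by (auto simp: in_span_pair_iff)
    then show ?thesis using f1f2 by (simp add: inner_add_left)
  qed
  \<comment> \<open>for a skew map, the kernel is the orthogonal complement of the image\<close>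
  have kernel: "r x = 0" if "x \<bullet> f1 = 0" "x \<bullet> f2 = 0" for x
  proof -
    have "x \<bullet> r y = 0" for y
      using orthogonal_to_span[of "r y" B x] B(5) f12 that by (auto simp: orthogonal_def)
    then have "r x \<bullet> r x = 0" using skew[of x "r x"] by simp
    then show ?thesis by simp
  qed
  have decomp: "r x = (x \<bullet> f1) *\<^sub>R r f1 + (x \<bullet> f2) *\<^sub>R r f2" for x
  proof -
    have "r (x - (x \<bullet> f1) *\<^sub>R f1 - (x \<bullet> f2) *\<^sub>R f2) = 0"
      using f1f2 by (intro kernel) (auto simp: inner_diff_left)
    then show ?thesis by (simp add: linear_eqs[OF lin] algebra_simps)
  qed
  define c where "c = f2 \<bullet> r f1"
  have rf1: "r f1 = c *\<^sub>R f2"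
    using in_range[of "r f1"] skew[of f1 f1] by (simp add: c_def inner_commute)
  have rf2: "r f2 = - c *\<^sub>R f1"
    using in_range[of "r f2"] skew[of f2 f2] skew[of f1 f2] by (simp add: c_def inner_commute)
  have "c \<noteq> 0"
  proof
    assume "c = 0"
    then have "range r = {0}" using decomp rf1 rf2 by auto
    then show False using B(1) f12 f1f2 by auto
  qed
  show ?thesis
  proof (rule that)
    show "(c *\<^sub>R f2) \<bullet> f1 = 0" "c *\<^sub>R f2 \<noteq> 0" using f1f2 \<open>c \<noteq> 0\<close> by auto
    show "r x = (x \<bullet> f1) *\<^sub>R (c *\<^sub>R f2) - (x \<bullet> (c *\<^sub>R f2)) *\<^sub>R f1" for x
      using decomp rf1 rf2 by simp
  qed (use f1f2 in simp)
qed

lemma gcs_R_normal_form: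
  fixes R :: "('a::euclidean_space \<Rightarrow> real) \<Rightarrow> 'a"
  assumes gcs: "gen_complex_structure br J R \<sigma>" and rank: "rank_R R = 2"
  obtains e1 e2 where "e1 \<bullet> e1 = 1" "e2 \<bullet> e1 = 0" "e2 \<noteq> 0"
    "\<And>\<alpha>. linear \<alpha> \<Longrightarrow> R \<alpha> = \<alpha> e1 *\<^sub>R e2 - \<alpha> e2 *\<^sub>R e1"
proof -
  define r where "r x = R (\<lambda>w. x \<bullet> w)" for x
  have R_r: "R \<alpha> = r (adjoint \<alpha> 1)" if "linear \<alpha>" for \<alpha>
  proof -
    have "\<alpha> = (\<lambda>w. adjoint \<alpha> 1 \<bullet> w)" using linear_functional_inner[OF that] by (rule ext)
    then show ?thesis unfolding r_def by (rule arg_cong)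
  qed
  have "linear r"
  proof (rule linearI)
    show "r (x + y) = r x + r y" for x y
      using gcs_R_combination[OF gcs linear_inner_right linear_inner_right, of 1 x 1 y] by (simp add: r_def inner_add_left)
    show "r (c *\<^sub>R x) = c *\<^sub>R r x" for c x
      using gcs_R_combination[OF gcs linear_inner_right linear_inner_right, of c x 0 x] by (simp add: r_def)
  qed
  moreover have "y \<bullet> r x = - (x \<bullet> r y)" for x y
    using gcs_R_skew[OF gcs linear_inner_right linear_inner_right, of x y] by (simp add: r_def)
  moreover have "range r = R ` dual_space"
  proof
    show "range r \<subseteq> R ` dual_space" unfolding r_def dual_space_def using linear_inner_right by blast
    show "R ` dual_space \<subseteq> range r" using R_r by (auto simp: dual_space_def)
  qed
  then have "dim (range r) = 2" using rank by (simp add: rank_R_def)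
  ultimately obtain e1 e2 where e: "e1 \<bullet> e1 = 1" "e2 \<bullet> e1 = 0" "e2 \<noteq> 0"
    and r: "\<And>x. r x = (x \<bullet> e1) *\<^sub>R e2 - (x \<bullet> e2) *\<^sub>R e1"
    by (rule skew_rank2_normal_form) blast
  have "R \<alpha> = \<alpha> e1 *\<^sub>R e2 - \<alpha> e2 *\<^sub>R e1" if "linear \<alpha>" for \<alpha>
    using R_r[OF that] r linear_functional_inner[OF that] by (simp add: inner_commute)
  with e show ?thesis by (rule that)
qed

section \<open>Adapted frames\<close>

lemma gcs_J_scalar_on_image_R:
  fixes e1 :: "'a::real_inner"
  assumes gcs: "gen_complex_structure br J R \<sigma>"
    and e: "e1 \<bullet> e1 = 1" "e2 \<bullet> e1 = 0" "e2 \<noteq> 0"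
    and R: "\<And>\<alpha>. linear \<alpha> \<Longrightarrow> R \<alpha> = \<alpha> e1 *\<^sub>R e2 - \<alpha> e2 *\<^sub>R e1"
  shows "J e1 = (e1 \<bullet> J e1) *\<^sub>R e1" "J e2 = (e1 \<bullet> J e1) *\<^sub>R e2"
proof -
  have linJ: "linear J" by (rule gcs_linear_J[OF gcs])
  have R_J: "R (\<lambda>w. x \<bullet> J w) = (x \<bullet> J e1) *\<^sub>R e2 - (x \<bullet> J e2) *\<^sub>R e1" for x
    using R linear_compose[OF linJ linear_inner_right] by (simp add: o_def)
  have e12: "e1 \<bullet> e2 = 0" using e(2) by (simp add: inner_commute)
  \<comment> \<open>\<open>J\<close> commutes with \<open>R\<close>; apply this to the two coordinate forms of the plane \<open>R(g*)\<close>\<close>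
  have J_e2: "J e2 = (e1 \<bullet> J e1) *\<^sub>R e2 - (e1 \<bullet> J e2) *\<^sub>R e1"
    using gcs_J_R[OF gcs linear_inner_right, of e1] R[OF linear_inner_right, of e1] e e12 R_J
    by simp
  have J_e1: "- (e2 \<bullet> e2) *\<^sub>R J e1 = (e2 \<bullet> J e1) *\<^sub>R e2 - (e2 \<bullet> J e2) *\<^sub>R e1"
    using gcs_J_R[OF gcs linear_inner_right, of e2] R[OF linear_inner_right, of e2] e R_J
    by (simp add: linear_eqs[OF linJ])
  have "e1 \<bullet> J e2 = 0"
    using arg_cong[OF J_e2, of "\<lambda>v. e1 \<bullet> v"] e e12 by (simp add: inner_diff_right)
  then show J2: "J e2 = (e1 \<bullet> J e1) *\<^sub>R e2" using J_e2 by simp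
  have "e2 \<bullet> e2 \<noteq> 0" using e(3) by simp
  moreover have "(e2 \<bullet> J e1) * (e2 \<bullet> e2) = 0"
    using arg_cong[OF J_e1, of "\<lambda>v. e2 \<bullet> v"] e by (simp add: inner_diff_right)
  ultimately have "e2 \<bullet> J e1 = 0" by simp
  then have "(e2 \<bullet> e2) *\<^sub>R (J e1 - (e1 \<bullet> J e1) *\<^sub>R e1) = 0"
    using J_e1 J2 by (simp add: algebra_simps)
  then show "J e1 = (e1 \<bullet> J e1) *\<^sub>R e1" using \<open>e2 \<bullet> e2 \<noteq> 0\<close> by simp
qed

lemma span_pair_neq_UNIV:
  fixes e1 :: "'a::euclidean_space"
  assumes "DIM('a) > 2"
  shows "span {e1, e2} \<noteq> UNIV"
proof
  assume "span {e1, e2} = UNIV"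
  then have "DIM('a) = dim {e1, e2}" by (metis dim_UNIV dim_span)
  also have "\<dots> \<le> card {e1, e2}" by (rule dim_le_card') simp
  also have "\<dots> \<le> 2" by (simp add: card_insert_if)
  finally show False using assms by simp
qed

lemma gcs_exists_J_square_minus_id:
  fixes e1 :: "'a::euclidean_space"
  assumes dim: "DIM('a) = 4" and gcs: "gen_complex_structure br J R \<sigma>"
    and J: "J e1 = lam *\<^sub>R e1" "J e2 = lam *\<^sub>R e2"
    and R: "\<And>\<alpha>. linear \<alpha> \<Longrightarrow> R \<alpha> = \<alpha> e1 *\<^sub>R e2 - \<alpha> e2 *\<^sub>R e1"
  obtains e3 where "e3 \<noteq> 0" "J (J e3) = - e3"
proof -
  have linJ: "linear J" by (rule gcs_linear_J[OF gcs])
  obtain u where u: "u \<notin> span {e1, e2}" using span_pair_neq_UNIV[of e1 e2] dim by auto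
  \<comment> \<open>\<open>J\<^sup>2 = -1 - R \<sigma>\<close>, and \<open>J\<^sup>2 = \<lambda>\<^sup>2\<close> on the image of \<open>R\<close>: correct \<open>u\<close> by a vector of that image\<close>
  define w where "w = \<sigma> u e2 *\<^sub>R e1 - \<sigma> u e1 *\<^sub>R e2"
  have JJu: "J (J u) = w - u"
    using gcs_J_square[OF gcs, of u] R[OF gcs_linear_sigma[OF gcs]] by (simp add: w_def algebra_simps)
  have JJw: "J (J w) = lam\<^sup>2 *\<^sub>R w"
    using J by (simp add: w_def linear_eqs[OF linJ] power2_eq_square algebra_simps)
  have pos: "1 + lam\<^sup>2 \<noteq> 0" by (rule one_plus_square_neq_0)
  define e3 where "e3 = u - (1 / (1 + lam\<^sup>2)) *\<^sub>R w"
  show ?thesis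
  proof (rule that)
    have "w \<in> span {e1, e2}" by (simp add: w_def span_base span_diff span_scale)
    then show "e3 \<noteq> 0" using u by (auto simp: e3_def span_scale)
    have "J (J e3) = (1 - lam\<^sup>2 / (1 + lam\<^sup>2)) *\<^sub>R w - u"
      by (simp add: e3_def JJu JJw linear_eqs[OF linJ] algebra_simps)
    also have "1 - lam\<^sup>2 / (1 + lam\<^sup>2) = 1 / (1 + lam\<^sup>2)" using pos by (simp add: field_simps)
    finally show "J (J e3) = - e3" by (simp add: e3_def)
  qed
qed

lemma independent4_J_eigenframe:
  fixes J :: "'a::real_vector \<Rightarrow> 'a"
  assumes linJ: "linear J" and pair: "\<And>a b. a *\<^sub>R e1 + b *\<^sub>R e2 = 0 \<Longrightarrow> a = 0 \<and> b = 0"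
    and J: "J e1 = lam *\<^sub>R e1" "J e2 = lam *\<^sub>R e2" "J e3 = - e4" "J e4 = e3" and "e3 \<noteq> 0"
  shows "independent4 e1 e2 e3 e4"
  unfolding independent4_def
proof (intro allI impI)
  fix x1 x2 x3 x4
  assume S: "x1 *\<^sub>R e1 + x2 *\<^sub>R e2 + x3 *\<^sub>R e3 + x4 *\<^sub>R e4 = 0"
  \<comment> \<open>\<open>J\<^sup>2\<close> is \<open>\<lambda>\<^sup>2\<close> on the first two vectors and \<open>-1\<close> on the last two\<close>
  then have "J (J (x1 *\<^sub>R e1 + x2 *\<^sub>R e2 + x3 *\<^sub>R e3 + x4 *\<^sub>R e4)) = 0"
    by (simp add: linear_eqs[OF linJ])
  then have "(lam\<^sup>2 * x1) *\<^sub>R e1 + (lam\<^sup>2 * x2) *\<^sub>R e2 - x3 *\<^sub>R e3 - x4 *\<^sub>R e4 = 0"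
    using J by (simp add: linear_eqs[OF linJ] power2_eq_square algebra_simps)
  with S have "((1 + lam\<^sup>2) * x1) *\<^sub>R e1 + ((1 + lam\<^sup>2) * x2) *\<^sub>R e2 = 0"
    by (simp add: algebra_simps)
  moreover have "1 + lam\<^sup>2 \<noteq> 0" by (rule one_plus_square_neq_0)
  ultimately have x12: "x1 = 0 \<and> x2 = 0" using pair by fastforce
  with S have T: "x3 *\<^sub>R e3 + x4 *\<^sub>R e4 = 0" by simp
  then have "J (x3 *\<^sub>R e3 + x4 *\<^sub>R e4) = 0" by (simp add: linear_eqs[OF linJ])
  then have T': "x4 *\<^sub>R e3 - x3 *\<^sub>R e4 = 0" using J by (simp add: linear_eqs[OF linJ])
  have "(x3 * x3 + x4 * x4) *\<^sub>R e3 = x3 *\<^sub>R (x3 *\<^sub>R e3 + x4 *\<^sub>R e4) + x4 *\<^sub>R (x4 *\<^sub>R e3 - x3 *\<^sub>R e4)"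
    by (simp add: algebra_simps)
  then have "(x3 * x3 + x4 * x4) *\<^sub>R e3 = 0" using T T' by simp
  then have "x3 = 0 \<and> x4 = 0" using \<open>e3 \<noteq> 0\<close> by (simp add: add_nonneg_eq_0_iff)
  with x12 show "x1 = 0 \<and> x2 = 0 \<and> x3 = 0 \<and> x4 = 0" by simp
qed

definition adapted_frame ::
  "('a::real_vector \<Rightarrow> 'a) \<Rightarrow> (('a \<Rightarrow> real) \<Rightarrow> 'a) \<Rightarrow> 'a \<Rightarrow> 'a \<Rightarrow> 'a \<Rightarrow> 'a \<Rightarrow> real \<Rightarrow> bool" where
  "adapted_frame J R e1 e2 e3 e4 lam \<longleftrightarrow> independent4 e1 e2 e3 e4 \<and>
     J e1 = lam *\<^sub>R e1 \<and> J e2 = lam *\<^sub>R e2 \<and> J e3 = - e4 \<and> J e4 = e3 \<and>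
     (\<forall>\<alpha>. linear \<alpha> \<longrightarrow> R \<alpha> = \<alpha> e1 *\<^sub>R e2 - \<alpha> e2 *\<^sub>R e1)"

lemma adapted_frame_exists:
  fixes J :: "'a::euclidean_space \<Rightarrow> 'a"
  assumes dim: "DIM('a) = 4" and gcs: "gen_complex_structure br J R \<sigma>" and rank: "rank_R R = 2"
  obtains e1 e2 e3 e4 lam where "adapted_frame J R e1 e2 e3 e4 lam"
proof -
  obtain e1 e2 where e: "e1 \<bullet> e1 = 1" "e2 \<bullet> e1 = 0" "e2 \<noteq> 0"
    and R: "\<And>\<alpha>. linear \<alpha> \<Longrightarrow> R \<alpha> = \<alpha> e1 *\<^sub>R e2 - \<alpha> e2 *\<^sub>R e1"
    by (rule gcs_R_normal_form[OF gcs rank]) blast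
  define lam where "lam = e1 \<bullet> J e1"
  have J12: "J e1 = lam *\<^sub>R e1" "J e2 = lam *\<^sub>R e2"
    using gcs_J_scalar_on_image_R[OF gcs e R] by (simp_all add: lam_def)
  obtain e3 where e3: "e3 \<noteq> 0" "J (J e3) = - e3"
    by (rule gcs_exists_J_square_minus_id[OF dim gcs J12 R])
  have linJ: "linear J" by (rule gcs_linear_J[OF gcs])
  have pair: "a = 0 \<and> b = 0" if "a *\<^sub>R e1 + b *\<^sub>R e2 = 0" for a b
  proof -
    have "a = 0" using arg_cong[OF that, of "\<lambda>v. v \<bullet> e1"] e by (simp add: inner_add_left)
    with that e(3) show ?thesis by simp
  qed
  have J34: "J e3 = - (- J e3)" "J (- J e3) = e3"
    using e3 by (simp_all add: linear_eqs[OF linJ])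
  have "adapted_frame J R e1 e2 e3 (- J e3) lam"
    unfolding adapted_frame_def
    using independent4_J_eigenframe[OF linJ pair J12 J34 e3(1)] J12 J34 R by blast
  then show ?thesis by (rule that)
qed

lemma independent4_plane_coeffs:
  assumes "independent4 e1 e2 e3 e4" and "a *\<^sub>R e1 + b *\<^sub>R e2 = c *\<^sub>R e1 + d *\<^sub>R e2"
  shows "a = c" "b = d"
  using independent4D(1,2)[OF assms(1), of "a - c" "b - d" 0 0] assms(2)
  by (simp_all add: algebra_simps)

lemma adapted_frame_sigma:
  assumes gcs: "gen_complex_structure br J R \<sigma>" and frame: "adapted_frame J R e1 e2 e3 e4 lam"
  shows "\<forall>i<4. \<forall>j<4. \<sigma> ([e1, e2, e3, e4] ! i) ([e1, e2, e3, e4] ! j) =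
    (1 + lam\<^sup>2) * (if i = 0 \<and> j = 1 then 1 else if i = 1 \<and> j = 0 then -1 else 0)"
proof -
  have ind: "independent4 e1 e2 e3 e4"
    and J: "J e1 = lam *\<^sub>R e1" "J e2 = lam *\<^sub>R e2" "J e3 = - e4" "J e4 = e3"
    and R: "\<And>\<alpha>. linear \<alpha> \<Longrightarrow> R \<alpha> = \<alpha> e1 *\<^sub>R e2 - \<alpha> e2 *\<^sub>R e1"
    using frame by (auto simp: adapted_frame_def)
  have linJ: "linear J" by (rule gcs_linear_J[OF gcs])
  have skew: "\<sigma> u v = - \<sigma> v u" for u v by (rule gcs_sigma_skew[OF gcs])
  \<comment> \<open>\<open>R \<sigma> = -1 - J\<^sup>2\<close> determines \<open>\<sigma>\<close> on pairs involving \<open>e1\<close> or \<open>e2\<close>\<close>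
  have R_sigma: "- \<sigma> u e2 = a \<and> \<sigma> u e1 = b" if "- u - J (J u) = a *\<^sub>R e1 + b *\<^sub>R e2" for u a b
  proof -
    have "(- \<sigma> u e2) *\<^sub>R e1 + \<sigma> u e1 *\<^sub>R e2 = R (\<sigma> u)"
      using R[OF gcs_linear_sigma[OF gcs]] by simp
    also have "\<dots> = - u - J (J u)"
      using gcs_J_square[OF gcs, of u] by (metis add_diff_cancel_left')
    finally show ?thesis using independent4_plane_coeffs[OF ind] that by metis
  qed
  have s1: "\<sigma> e1 e2 = 1 + lam\<^sup>2" "\<sigma> e1 e1 = 0"
    using R_sigma[of e1 "- (1 + lam\<^sup>2)" 0] J
    by (simp_all add: linear_eqs[OF linJ] power2_eq_square algebra_simps)
  have s2: "\<sigma> e2 e2 = 0" "\<sigma> e2 e1 = - (1 + lam\<^sup>2)"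
    using R_sigma[of e2 0 "- (1 + lam\<^sup>2)"] J
    by (simp_all add: linear_eqs[OF linJ] power2_eq_square algebra_simps)
  have s3: "\<sigma> e3 e2 = 0" "\<sigma> e3 e1 = 0"
    using R_sigma[of e3 0 0] J by (simp_all add: linear_eqs[OF linJ])
  have s4: "\<sigma> e4 e2 = 0" "\<sigma> e4 e1 = 0"
    using R_sigma[of e4 0 0] J by (simp_all add: linear_eqs[OF linJ])
  have s34: "\<sigma> e3 e4 = 0"
  proof -
    have "\<sigma> (- e4) = (\<lambda>w. - \<sigma> e4 w)"
      using gcs_sigma_combination[OF gcs, of "-1" e4 0 e4] by simp
    then have "- \<sigma> e4 e3 = - \<sigma> e3 e4"
      using gcs_sigma_J[OF gcs, of e3 e3] J(3) linear_eqs(4)[OF gcs_linear_sigma[OF gcs]] by simp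
    then show ?thesis using skew[of e4 e3] by simp
  qed
  have four: "i < 4 \<Longrightarrow> i = 0 \<or> i = 1 \<or> i = 2 \<or> i = (3::nat)" for i by arith
  show ?thesis
  proof (intro allI impI)
    fix i j :: nat
    assume "i < 4" "j < 4"
    then show "\<sigma> ([e1, e2, e3, e4] ! i) ([e1, e2, e3, e4] ! j) =
        (1 + lam\<^sup>2) * (if i = 0 \<and> j = 1 then 1 else if i = 1 \<and> j = 0 then -1 else 0)"
      using four[of i] four[of j] s1 s2 s3 s4 s34 skew[of e1 e3] skew[of e1 e4] skew[of e2 e3]
        skew[of e2 e4] skew[of e4 e3] skew[of e3 e3] skew[of e4 e4]
      by auto
  qed
qed

lemma independent4_change:
  assumes ind: "independent4 e1 e2 e3 e4" and det: "A * D - B * C = 1" and rot: "P\<^sup>2 + Q\<^sup>2 \<noteq> 0"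
  shows "independent4 (A *\<^sub>R e1 + B *\<^sub>R e2) (C *\<^sub>R e1 + D *\<^sub>R e2)
    (P *\<^sub>R e3 + Q *\<^sub>R e4) (P *\<^sub>R e4 - Q *\<^sub>R e3)"
  unfolding independent4_def
proof (intro allI impI)
  fix x1 x2 x3 x4
  assume "x1 *\<^sub>R (A *\<^sub>R e1 + B *\<^sub>R e2) + x2 *\<^sub>R (C *\<^sub>R e1 + D *\<^sub>R e2)
    + x3 *\<^sub>R (P *\<^sub>R e3 + Q *\<^sub>R e4) + x4 *\<^sub>R (P *\<^sub>R e4 - Q *\<^sub>R e3) = 0"
  then have "(x1 * A + x2 * C) *\<^sub>R e1 + (x1 * B + x2 * D) *\<^sub>R e2
    + (x3 * P - x4 * Q) *\<^sub>R e3 + (x3 * Q + x4 * P) *\<^sub>R e4 = 0"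
    by (simp add: algebra_simps)
  note z = independent4D[OF ind this]
  have "x1 = x1 * (A * D - B * C)" using det by simp
  also have "\<dots> = D * (x1 * A + x2 * C) - C * (x1 * B + x2 * D)" by (simp add: algebra_simps)
  finally have x1: "x1 = 0" using z by simp
  have "x2 = x2 * (A * D - B * C)" using det by simp
  also have "\<dots> = A * (x1 * B + x2 * D) - B * (x1 * A + x2 * C)" by (simp add: algebra_simps)
  finally have x2: "x2 = 0" using z by simp
  have "x3 * (P\<^sup>2 + Q\<^sup>2) = P * (x3 * P - x4 * Q) + Q * (x3 * Q + x4 * P)"
    by (simp add: algebra_simps power2_eq_square)
  then have x3: "x3 = 0" using z rot by auto
  have "x4 * (P\<^sup>2 + Q\<^sup>2) = P * (x3 * Q + x4 * P) - Q * (x3 * P - x4 * Q)"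
    by (simp add: algebra_simps power2_eq_square)
  then have x4: "x4 = 0" using z rot by auto
  show "x1 = 0 \<and> x2 = 0 \<and> x3 = 0 \<and> x4 = 0" using x1 x2 x3 x4 by simp
qed

lemma adapted_frame_change:
  assumes linJ: "linear J" and frame: "adapted_frame J R e1 e2 e3 e4 lam"
    and det: "A * D - B * C = 1" and rot: "P\<^sup>2 + Q\<^sup>2 \<noteq> 0"
  shows "adapted_frame J R (A *\<^sub>R e1 + B *\<^sub>R e2) (C *\<^sub>R e1 + D *\<^sub>R e2)
    (P *\<^sub>R e3 + Q *\<^sub>R e4) (P *\<^sub>R e4 - Q *\<^sub>R e3) lam"
proof -
  have ind: "independent4 e1 e2 e3 e4"
    and J: "J e1 = lam *\<^sub>R e1" "J e2 = lam *\<^sub>R e2" "J e3 = - e4" "J e4 = e3"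
    and R: "\<And>\<alpha>. linear \<alpha> \<Longrightarrow> R \<alpha> = \<alpha> e1 *\<^sub>R e2 - \<alpha> e2 *\<^sub>R e1"
    using frame by (auto simp: adapted_frame_def)
  have "R \<alpha> = \<alpha> (A *\<^sub>R e1 + B *\<^sub>R e2) *\<^sub>R (C *\<^sub>R e1 + D *\<^sub>R e2)
      - \<alpha> (C *\<^sub>R e1 + D *\<^sub>R e2) *\<^sub>R (A *\<^sub>R e1 + B *\<^sub>R e2)" if "linear \<alpha>" for \<alpha>
  proof -
    have "\<alpha> (A *\<^sub>R e1 + B *\<^sub>R e2) *\<^sub>R (C *\<^sub>R e1 + D *\<^sub>R e2) - \<alpha> (C *\<^sub>R e1 + D *\<^sub>R e2) *\<^sub>R (A *\<^sub>R e1 + B *\<^sub>R e2)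
       = (A * D - B * C) *\<^sub>R (\<alpha> e1 *\<^sub>R e2 - \<alpha> e2 *\<^sub>R e1)"
      by (simp add: linear_eqs[OF that] algebra_simps)
    then show ?thesis using det R[OF that] by simp
  qed
  moreover have "J (A *\<^sub>R e1 + B *\<^sub>R e2) = lam *\<^sub>R (A *\<^sub>R e1 + B *\<^sub>R e2)"
    "J (C *\<^sub>R e1 + D *\<^sub>R e2) = lam *\<^sub>R (C *\<^sub>R e1 + D *\<^sub>R e2)"
    "J (P *\<^sub>R e3 + Q *\<^sub>R e4) = - (P *\<^sub>R e4 - Q *\<^sub>R e3)"
    "J (P *\<^sub>R e4 - Q *\<^sub>R e3) = P *\<^sub>R e3 + Q *\<^sub>R e4"
    using J by (simp_all add: linear_eqs[OF linJ] algebra_simps)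
  ultimately show ?thesis
    using independent4_change[OF ind det rot] unfolding adapted_frame_def by blast
qed

lemma adapted_frame_change_plane:
  assumes "linear J" and "adapted_frame J R e1 e2 e3 e4 lam" and "A * D - B * C = 1"
  shows "adapted_frame J R (A *\<^sub>R e1 + B *\<^sub>R e2) (C *\<^sub>R e1 + D *\<^sub>R e2) e3 e4 lam"
  using adapted_frame_change[OF assms, of 1 0] by simp

lemma adapted_frame_rotate:
  assumes "linear J" and "adapted_frame J R e1 e2 e3 e4 lam" and "P\<^sup>2 + Q\<^sup>2 \<noteq> 0"
  shows "adapted_frame J R e1 e2 (P *\<^sub>R e3 + Q *\<^sub>R e4) (P *\<^sub>R e4 - Q *\<^sub>R e3) lam"
  using adapted_frame_change[OF assms(1,2) _ assms(3), of 1 1 0 0] by simp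

section \<open>Brackets in an adapted frame\<close>

lemma lie_algebra_linear_right: "lie_algebra br \<Longrightarrow> linear (br x)"
  by (simp add: lie_algebra_def bilinear_def)

lemma lie_algebra_linear_left: "lie_algebra br \<Longrightarrow> linear (\<lambda>x. br x y)"
  by (simp add: lie_algebra_def bilinear_def)

lemma lie_algebra_self: "lie_algebra br \<Longrightarrow> br u u = 0"
  by (simp add: lie_algebra_def)

lemma lie_algebra_jacobi:
  "lie_algebra br \<Longrightarrow> br u (br v w) + br v (br w u) + br w (br u v) = 0"
  by (simp add: lie_algebra_def)

lemma lie_algebra_antisym:
  assumes "lie_algebra br"
  shows "br u v = - br v u"
proof -
  have "br (u + v) (u + v) = 0" by (rule lie_algebra_self[OF assms])
  then have "br u u + br v u + (br u v + br v v) = 0"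
    by (simp add: linear_eqs[OF lie_algebra_linear_left[OF assms]]
        linear_eqs[OF lie_algebra_linear_right[OF assms]])
  then have "br u v + br v u = 0" by (simp add: lie_algebra_self[OF assms] add.commute)
  then show ?thesis by (simp add: eq_neg_iff_add_eq_0)
qed

lemma nijenhuis_one_forms:
  fixes J :: "'a::real_vector \<Rightarrow> 'a"
  assumes lie: "lie_algebra br" and gcs: "gen_complex_structure br J R \<sigma>"
    and "linear \<alpha>" "linear \<beta>"
  shows "fst (nijenhuis br (gc_K J R \<sigma>) (0, \<alpha>) (0, \<beta>)) =
      br (R \<alpha>) (R \<beta>) - R (\<lambda>w. - \<beta> (br (R \<alpha>) w)) - R (\<lambda>w. \<alpha> (br (R \<beta>) w))"
    and "snd (nijenhuis br (gc_K J R \<sigma>) (0, \<alpha>) (0, \<beta>)) w =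
      \<beta> (J (br (R \<alpha>) w)) - \<alpha> (J (br (R \<beta>) w)) - \<beta> (br (R \<alpha>) (J w)) + \<alpha> (br (R \<beta>) (J w))"
  using linear_eqs(5)[OF lie_algebra_linear_left[OF lie]] linear_eqs(5)[OF lie_algebra_linear_right[OF lie]]
    linear_eqs(5)[OF gcs_linear_J[OF gcs]] gcs_sigma_zero[OF gcs] gcs_R_zero[OF gcs]
    linear_eqs(5)[OF assms(3)] linear_eqs(5)[OF assms(4)]
  unfolding nijenhuis_def phi_bracket_def gc_K_def ad_t_def Let_def by simp_all

locale lie_frame = coordinates4 e1 e2 e3 e4 d1 d2 d3 d4
  for e1 e2 e3 e4 :: "'a::euclidean_space" and d1 d2 d3 d4 +
  fixes br :: "'a \<Rightarrow> 'a \<Rightarrow> 'a"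
  assumes lie: "lie_algebra br"
begin

lemmas bracket_eqs [simp] =
  linear_eqs[OF lie_algebra_linear_right[OF lie]] linear_eqs[OF lie_algebra_linear_left[OF lie]]
  lie_algebra_self[OF lie]

lemma coord_bracket_swap:
  "d1 (br x y) = - d1 (br y x)" "d2 (br x y) = - d2 (br y x)"
  "d3 (br x y) = - d3 (br y x)" "d4 (br x y) = - d4 (br y x)"
  using lie_algebra_antisym[OF lie, of x y] by simp_all

end

locale gcs_frame = lie_frame e1 e2 e3 e4 d1 d2 d3 d4 br
  for e1 e2 e3 e4 :: "'a::euclidean_space" and d1 d2 d3 d4 br +
  fixes J :: "'a \<Rightarrow> 'a" and R :: "('a \<Rightarrow> real) \<Rightarrow> 'a" and \<sigma> :: "'a \<Rightarrow> 'a \<Rightarrow> real" and lam :: real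
  assumes gcs: "gen_complex_structure br J R \<sigma>" and frame: "adapted_frame J R e1 e2 e3 e4 lam"
begin

lemma J_frame: "J e1 = lam *\<^sub>R e1" "J e2 = lam *\<^sub>R e2" "J e3 = - e4" "J e4 = e3"
  using frame by (simp_all add: adapted_frame_def)

lemma R_frame: "linear \<alpha> \<Longrightarrow> R \<alpha> = \<alpha> e1 *\<^sub>R e2 - \<alpha> e2 *\<^sub>R e1"
  using frame by (simp add: adapted_frame_def)

lemma coord_J: "d1 (J x) = lam * d1 x" "d2 (J x) = lam * d2 x" "d3 (J x) = d4 x" "d4 (J x) = - d3 x"
proof -
  have "J x = (lam * d1 x) *\<^sub>R e1 + (lam * d2 x) *\<^sub>R e2 + (- d3 x) *\<^sub>R e4 + d4 x *\<^sub>R e3"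
    by (subst expansion[of x]) (simp add: linear_eqs[OF gcs_linear_J[OF gcs]] J_frame mult.commute)
  then show "d1 (J x) = lam * d1 x" "d2 (J x) = lam * d2 x" "d3 (J x) = d4 x" "d4 (J x) = - d3 x"
    by simp_all
qed

lemma R_coord: "R d1 = e2" "R d2 = - e1" "R d3 = 0" "R d4 = 0"
  using R_frame[OF linear_coord(1)] R_frame[OF linear_coord(2)]
    R_frame[OF linear_coord(3)] R_frame[OF linear_coord(4)] by simp_all

lemma R_coord_bracket:
  assumes "linear d"
  shows "R (\<lambda>w. d (br x w)) = d (br x e1) *\<^sub>R e2 - d (br x e2) *\<^sub>R e1"
  using R_frame linear_compose[OF lie_algebra_linear_right[OF lie] assms] by (simp add: o_def)

lemma R_coord_bracket_uminus:
  assumes "linear d"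
  shows "R (\<lambda>w. - d (br x w)) = - (d (br x e1) *\<^sub>R e2 - d (br x e2) *\<^sub>R e1)"
  using gcs_R_uminus[OF gcs linear_compose[OF lie_algebra_linear_right[OF lie] assms, unfolded o_def]]
    R_coord_bracket[OF assms] by simp

lemma nijenhuis_one_forms_zero:
  "linear \<alpha> \<Longrightarrow> linear \<beta> \<Longrightarrow> nijenhuis br (gc_K J R \<sigma>) (0, \<alpha>) (0, \<beta>) = (0, \<lambda>w. 0)"
  using gcs unfolding gen_complex_structure_def Phi_def dual_space_def by auto

text \<open>In the names below, \<open>nijenhuis_ij\<close> refers to the Nijenhuis condition on the pair of
  coordinate forms \<open>(e\<^sup>i, e\<^sup>j)\<close>, i.e. \<open>(d\<^sub>i, d\<^sub>j)\<close>.\<close>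

lemma nijenhuis_12_vector: "d3 (br e1 e2) = 0" "d4 (br e1 e2) = 0"
proof -
  have "fst (nijenhuis br (gc_K J R \<sigma>) (0, d1) (0, d2)) = 0"
    using nijenhuis_one_forms_zero[OF linear_coord(1,2)] by simp
  then have "br e2 (- e1) - R (\<lambda>w. - d2 (br e2 w)) - R (\<lambda>w. - d1 (br e1 w)) = 0"
    using nijenhuis_one_forms(1)[OF lie gcs linear_coord(1,2)] R_coord by simp
  then have v: "br e1 e2 - d2 (br e1 e2) *\<^sub>R e2 - d1 (br e1 e2) *\<^sub>R e1 = 0"
    using R_coord_bracket_uminus[OF linear_coord(2), of e2] R_coord_bracket_uminus[OF linear_coord(1), of e1]
      lie_algebra_antisym[OF lie, of e2 e1]
    by simp
  show "d3 (br e1 e2) = 0" "d4 (br e1 e2) = 0"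
    using arg_cong[OF v, of d3] arg_cong[OF v, of d4] by simp_all
qed

lemma nijenhuis_12_form:
  "d1 (br e1 e3) + d2 (br e2 e3) = 0" "d1 (br e1 e4) + d2 (br e2 e4) = 0"
proof -
  have N: "lam * d2 (br e2 w) + lam * d1 (br e1 w) - d2 (br e2 (J w)) - d1 (br e1 (J w)) = 0" for w
  proof -
    have "snd (nijenhuis br (gc_K J R \<sigma>) (0, d1) (0, d2)) w = 0"
      using nijenhuis_one_forms_zero[OF linear_coord(1,2)] by simp
    then show ?thesis
      using nijenhuis_one_forms(2)[OF lie gcs linear_coord(1,2), of w] R_coord by (simp add: coord_J)
  qed
  define x where "x = d1 (br e1 e3) + d2 (br e2 e3)"
  define y where "y = d1 (br e1 e4) + d2 (br e2 e4)"
  have "lam * x + y = 0" "lam * y - x = 0"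
    using N[of e3] N[of e4] J_frame by (simp_all add: x_def y_def algebra_simps)
  then have "(1 + lam\<^sup>2) * y = 0" by (simp add: algebra_simps power2_eq_square)
  then have "y = 0" using one_plus_square_neq_0 by simp
  with \<open>lam * y - x = 0\<close> show "d1 (br e1 e3) + d2 (br e2 e3) = 0" "d1 (br e1 e4) + d2 (br e2 e4) = 0"
    by (simp_all add: x_def y_def)
qed

lemma nijenhuis_13_23_form:
  "d4 (br e2 e3) = - d3 (br e2 e4)" "d4 (br e2 e4) = d3 (br e2 e3)"
  "d4 (br e1 e3) = - d3 (br e1 e4)" "d4 (br e1 e4) = d3 (br e1 e3)"
proof -
  have N13: "d4 (br e2 w) - d3 (br e2 (J w)) = 0" for w
  proof -
    have "snd (nijenhuis br (gc_K J R \<sigma>) (0, d1) (0, d3)) w = 0"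
      using nijenhuis_one_forms_zero[OF linear_coord(1,3)] by simp
    then show ?thesis
      using nijenhuis_one_forms(2)[OF lie gcs linear_coord(1,3), of w] R_coord
      by (simp add: coord_J linear_eqs(5)[OF gcs_linear_J[OF gcs]])
  qed
  have N23: "d4 (br e1 w) - d3 (br e1 (J w)) = 0" for w
  proof -
    have "snd (nijenhuis br (gc_K J R \<sigma>) (0, d2) (0, d3)) w = 0"
      using nijenhuis_one_forms_zero[OF linear_coord(2,3)] by simp
    then show ?thesis
      using nijenhuis_one_forms(2)[OF lie gcs linear_coord(2,3), of w] R_coord
      by (simp add: coord_J linear_eqs(5)[OF gcs_linear_J[OF gcs]])
  qed
  show "d4 (br e2 e3) = - d3 (br e2 e4)" "d4 (br e2 e4) = d3 (br e2 e3)"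
    "d4 (br e1 e3) = - d3 (br e1 e4)" "d4 (br e1 e4) = d3 (br e1 e3)"
    using N13[of e3] N13[of e4] N23[of e3] N23[of e4] J_frame by simp_all
qed

lemma bracket_e1e2_in_plane:
  obtains a b where "br e1 e2 = a *\<^sub>R e1 + b *\<^sub>R e2"
  using expansion[of "br e1 e2"] nijenhuis_12_vector that by simp

lemma bracket_normal_form:
  assumes "unimodular br" and h12: "br e1 e2 = a *\<^sub>R e1 + b *\<^sub>R e2"
  obtains p1 p2 s1 s2 th1 t1 u1 th2 m1 m2 where
    "br e1 e3 = p1 *\<^sub>R e1 + p2 *\<^sub>R e2 + (- b / 2) *\<^sub>R e3 + th1 *\<^sub>R e4"
    "br e1 e4 = s1 *\<^sub>R e1 + s2 *\<^sub>R e2 + (- th1) *\<^sub>R e3 + (- b / 2) *\<^sub>R e4"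
    "br e2 e3 = t1 *\<^sub>R e1 + (- p1) *\<^sub>R e2 + (a / 2) *\<^sub>R e3 + th2 *\<^sub>R e4"
    "br e2 e4 = u1 *\<^sub>R e1 + (- s1) *\<^sub>R e2 + (- th2) *\<^sub>R e3 + (a / 2) *\<^sub>R e4"
    "br e3 e4 = m1 *\<^sub>R e1 + m2 *\<^sub>R e2"
proof -
  have trace: "d1 (br u e1) + d2 (br u e2) + d3 (br u e3) + d4 (br u e4) = 0" for u
    using assms(1) lin_trace_eq[OF lie_algebra_linear_right[OF lie], of u] by (simp add: unimodular_def)
  note tau = nijenhuis_12_form and rot = nijenhuis_13_23_form and sw = coord_bracket_swap
  have ab: "d1 (br e1 e2) = a" "d2 (br e1 e2) = b" using h12 by simp_all
  have tr12: "b + d3 (br e1 e3) + d4 (br e1 e4) = 0" "- a + d3 (br e2 e3) + d4 (br e2 e4) = 0"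
    using trace[of e1] trace[of e2] sw(1)[of e2 e1] ab by simp_all
  have tr34: "- d1 (br e1 e3) - d2 (br e2 e3) + d4 (br e3 e4) = 0"
    "- d1 (br e1 e4) - d2 (br e2 e4) - d3 (br e3 e4) = 0"
    using trace[of e3] trace[of e4] sw(1)[of e3 e1] sw(2)[of e3 e2]
      sw(1)[of e4 e1] sw(2)[of e4 e2] sw(3)[of e4 e3]
    by simp_all
  show ?thesis
  proof (rule that)
    have "d3 (br e1 e3) = - b / 2" using tr12 rot by simp
    then show "br e1 e3 = d1 (br e1 e3) *\<^sub>R e1 + d2 (br e1 e3) *\<^sub>R e2 + (- b / 2) *\<^sub>R e3 + d4 (br e1 e3) *\<^sub>R e4"
      using expansion[of "br e1 e3"] by simp
    have "d4 (br e1 e4) = - b / 2" using tr12 rot by simp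
    then show "br e1 e4 = d1 (br e1 e4) *\<^sub>R e1 + d2 (br e1 e4) *\<^sub>R e2 + (- d4 (br e1 e3)) *\<^sub>R e3 + (- b / 2) *\<^sub>R e4"
      using expansion[of "br e1 e4"] rot by simp
    have h23: "d3 (br e2 e3) = a / 2" "d2 (br e2 e3) = - d1 (br e1 e3)"
      using tr12 rot tau by simp_all
    show "br e2 e3 = d1 (br e2 e3) *\<^sub>R e1 + (- d1 (br e1 e3)) *\<^sub>R e2 + (a / 2) *\<^sub>R e3 + d4 (br e2 e3) *\<^sub>R e4"
      using expansion[of "br e2 e3"] unfolding h23 .
    have h24: "d4 (br e2 e4) = a / 2" "d2 (br e2 e4) = - d1 (br e1 e4)" "d3 (br e2 e4) = - d4 (br e2 e3)"
      using tr12 rot tau by simp_all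
    show "br e2 e4 = d1 (br e2 e4) *\<^sub>R e1 + (- d1 (br e1 e4)) *\<^sub>R e2 + (- d4 (br e2 e3)) *\<^sub>R e3 + (a / 2) *\<^sub>R e4"
      using expansion[of "br e2 e4"] unfolding h24 .
    have "d3 (br e3 e4) = 0" "d4 (br e3 e4) = 0" using tr34 tau by simp_all
    then show "br e3 e4 = d1 (br e3 e4) *\<^sub>R e1 + d2 (br e3 e4) *\<^sub>R e2"
      using expansion[of "br e3 e4"] by simp
  qed
qed

end

context lie_frame
begin

lemma normal_form_jacobi:
  assumes h12: "br e1 e2 = a *\<^sub>R e1 + b *\<^sub>R e2"
    and h13: "br e1 e3 = p1 *\<^sub>R e1 + p2 *\<^sub>R e2 + (- b / 2) *\<^sub>R e3 + th1 *\<^sub>R e4"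
    and h14: "br e1 e4 = s1 *\<^sub>R e1 + s2 *\<^sub>R e2 + (- th1) *\<^sub>R e3 + (- b / 2) *\<^sub>R e4"
    and h23: "br e2 e3 = t1 *\<^sub>R e1 + (- p1) *\<^sub>R e2 + (a / 2) *\<^sub>R e3 + th2 *\<^sub>R e4"
    and h24: "br e2 e4 = u1 *\<^sub>R e1 + (- s1) *\<^sub>R e2 + (- th2) *\<^sub>R e3 + (a / 2) *\<^sub>R e4"
    and h34: "br e3 e4 = m1 *\<^sub>R e1 + m2 *\<^sub>R e2"
  shows "a * th1 + b * th2 = 0"
    and "- (a * p1) / 2 - (b * t1) / 2 + s1 * th2 - th1 * u1 = 0"
    and "- (a * p2) / 2 + (b * p1) / 2 + s1 * th1 + s2 * th2 = 0"
    and "- (a * s1) / 2 - (b * u1) / 2 - p1 * th2 + t1 * th1 = 0"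
    and "- (a * s2) / 2 + (b * s1) / 2 - p1 * th1 - p2 * th2 = 0"
    and "a * m2 + b * m1 - p2 * u1 + s2 * t1 = 0"
    and "b * m2 - p1 * s2 + p2 * s1 = 0"
    and "- a * m1 + p1 * u1 - s1 * t1 = 0"
proof -
  have sw: "br e2 e1 = - br e1 e2" "br e3 e1 = - br e1 e3" "br e4 e1 = - br e1 e4"
    "br e3 e2 = - br e2 e3" "br e4 e2 = - br e2 e4" "br e4 e3 = - br e3 e4"
    by (rule lie_algebra_antisym[OF lie])+
  note jac = lie_algebra_jacobi[OF lie]
  note H = h12 h13 h14 h23 h24 h34
  have j123: "d1 (br e1 (br e2 e3) + br e2 (br e3 e1) + br e3 (br e1 e2)) = 0"
    "d2 (br e1 (br e2 e3) + br e2 (br e3 e1) + br e3 (br e1 e2)) = 0"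
    "d4 (br e1 (br e2 e3) + br e2 (br e3 e1) + br e3 (br e1 e2)) = 0"
    using jac[of e1 e2 e3] by simp_all
  have j124: "d1 (br e1 (br e2 e4) + br e2 (br e4 e1) + br e4 (br e1 e2)) = 0"
    "d2 (br e1 (br e2 e4) + br e2 (br e4 e1) + br e4 (br e1 e2)) = 0"
    using jac[of e1 e2 e4] by simp_all
  have j134: "d1 (br e1 (br e3 e4) + br e3 (br e4 e1) + br e4 (br e1 e3)) = 0"
    "d2 (br e1 (br e3 e4) + br e3 (br e4 e1) + br e4 (br e1 e3)) = 0"
    using jac[of e1 e3 e4] by simp_all
  have j234: "d1 (br e2 (br e3 e4) + br e3 (br e4 e2) + br e4 (br e2 e3)) = 0"
    using jac[of e2 e3 e4] by simp
  show "a * th1 + b * th2 = 0"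
    using j123(3) by (simp add: sw H algebra_simps)
  show "- (a * p1) / 2 - (b * t1) / 2 + s1 * th2 - th1 * u1 = 0"
    using j123(1) by (simp add: sw H algebra_simps)
  show "- (a * p2) / 2 + (b * p1) / 2 + s1 * th1 + s2 * th2 = 0"
    using j123(2) by (simp add: sw H algebra_simps)
  show "- (a * s1) / 2 - (b * u1) / 2 - p1 * th2 + t1 * th1 = 0"
    using j124(1) by (simp add: sw H algebra_simps)
  show "- (a * s2) / 2 + (b * s1) / 2 - p1 * th1 - p2 * th2 = 0"
    using j124(2) by (simp add: sw H algebra_simps)
  show "a * m2 + b * m1 - p2 * u1 + s2 * t1 = 0"
    using j134(1) by (simp add: sw H algebra_simps)
  show "b * m2 - p1 * s2 + p2 * s1 = 0"
    using j134(2) by (simp add: sw H algebra_simps)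
  show "- a * m1 + p1 * u1 - s1 * t1 = 0"
    using j234 by (simp add: sw H algebra_simps)
qed

lemma rotated_brackets:
  assumes h13: "br e1 e3 = p1 *\<^sub>R e1 + p2 *\<^sub>R e2" and h14: "br e1 e4 = s1 *\<^sub>R e1 + s2 *\<^sub>R e2"
    and h23: "br e2 e3 = t1 *\<^sub>R e1 - p1 *\<^sub>R e2" and h24: "br e2 e4 = u1 *\<^sub>R e1 - s1 *\<^sub>R e2"
    and h34: "br e3 e4 = m1 *\<^sub>R e1 + m2 *\<^sub>R e2"
  shows "br e1 (P *\<^sub>R e3 + Q *\<^sub>R e4) = (P * p1 + Q * s1) *\<^sub>R e1 + (P * p2 + Q * s2) *\<^sub>R e2"
    and "br e2 (P *\<^sub>R e3 + Q *\<^sub>R e4) = (P * t1 + Q * u1) *\<^sub>R e1 - (P * p1 + Q * s1) *\<^sub>R e2"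
    and "br (P *\<^sub>R e3 + Q *\<^sub>R e4) (P *\<^sub>R e4 - Q *\<^sub>R e3) = ((P\<^sup>2 + Q\<^sup>2) * m1) *\<^sub>R e1 + ((P\<^sup>2 + Q\<^sup>2) * m2) *\<^sub>R e2"
    and "br (P *\<^sub>R e4 - Q *\<^sub>R e3) e1 = (Q * p1 - P * s1) *\<^sub>R e1 + (Q * p2 - P * s2) *\<^sub>R e2"
    and "br (P *\<^sub>R e4 - Q *\<^sub>R e3) e2 = (Q * t1 - P * u1) *\<^sub>R e1 - (Q * p1 - P * s1) *\<^sub>R e2"
proof -
  have sw: "br e3 e1 = - br e1 e3" "br e4 e1 = - br e1 e4"
    "br e3 e2 = - br e2 e3" "br e4 e2 = - br e2 e4" "br e4 e3 = - br e3 e4"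
    by (rule lie_algebra_antisym[OF lie])+
  show "br e1 (P *\<^sub>R e3 + Q *\<^sub>R e4) = (P * p1 + Q * s1) *\<^sub>R e1 + (P * p2 + Q * s2) *\<^sub>R e2"
    "br e2 (P *\<^sub>R e3 + Q *\<^sub>R e4) = (P * t1 + Q * u1) *\<^sub>R e1 - (P * p1 + Q * s1) *\<^sub>R e2"
    "br (P *\<^sub>R e3 + Q *\<^sub>R e4) (P *\<^sub>R e4 - Q *\<^sub>R e3) = ((P\<^sup>2 + Q\<^sup>2) * m1) *\<^sub>R e1 + ((P\<^sup>2 + Q\<^sup>2) * m2) *\<^sub>R e2"
    "br (P *\<^sub>R e4 - Q *\<^sub>R e3) e1 = (Q * p1 - P * s1) *\<^sub>R e1 + (Q * p2 - P * s2) *\<^sub>R e2"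
    "br (P *\<^sub>R e4 - Q *\<^sub>R e3) e2 = (Q * t1 - P * u1) *\<^sub>R e1 - (Q * p1 - P * s1) *\<^sub>R e2"
    by (simp_all add: assms sw algebra_simps power2_eq_square)
qed

end

lemma adapted_frame_gcs_frame:
  fixes br :: "'a::euclidean_space \<Rightarrow> 'a \<Rightarrow> 'a"
  assumes dim: "DIM('a) = 4" and lie: "lie_algebra br" and gcs: "gen_complex_structure br J R \<sigma>"
    and frame: "adapted_frame J R e1 e2 e3 e4 lam"
  obtains d1 d2 d3 d4 where "gcs_frame e1 e2 e3 e4 d1 d2 d3 d4 br J R \<sigma> lam"
proof -
  have "independent4 e1 e2 e3 e4" using frame by (simp add: adapted_frame_def)
  then obtain d1 d2 d3 d4 where "coordinates4 e1 e2 e3 e4 d1 d2 d3 d4"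
    by (rule independent4_coordinates[OF dim])
  then have "gcs_frame e1 e2 e3 e4 d1 d2 d3 d4 br J R \<sigma> lam"
    using lie gcs frame
    by (intro gcs_frame.intro lie_frame.intro lie_frame_axioms.intro gcs_frame_axioms.intro)
  then show ?thesis by (rule that)
qed

section \<open>The three normal forms\<close>

definition brackets_U1 :: "('a::real_vector \<Rightarrow> 'a \<Rightarrow> 'a) \<Rightarrow> 'a \<Rightarrow> 'a \<Rightarrow> 'a \<Rightarrow> 'a \<Rightarrow> bool" where
  "brackets_U1 br e1 e2 e3 e4 \<longleftrightarrow> (\<exists>y q1 q2 :: real.
     br e1 e2 = e1 \<and> br e1 e3 = 0 \<and> br e1 e4 = 0 \<and>
     br e2 e3 = (1/2) *\<^sub>R e3 - y *\<^sub>R e4 - q1 *\<^sub>R e1 \<and>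
     br e2 e4 = y *\<^sub>R e3 + (1/2) *\<^sub>R e4 - q2 *\<^sub>R e1 \<and>
     br e3 e4 = 0)"

definition brackets_U2 :: "('a::real_vector \<Rightarrow> 'a \<Rightarrow> 'a) \<Rightarrow> 'a \<Rightarrow> 'a \<Rightarrow> 'a \<Rightarrow> 'a \<Rightarrow> bool" where
  "brackets_U2 br e1 e2 e3 e4 \<longleftrightarrow> (\<exists>y q1 q2 b1 b2 :: real.
     br e1 e2 = 0 \<and> br e1 e3 = 0 \<and> br e1 e4 = 0 \<and>
     br e3 e4 = b1 *\<^sub>R e1 + b2 *\<^sub>R e2 \<and>
     br e2 e3 = - (y *\<^sub>R e4) - q1 *\<^sub>R e1 \<and>
     br e2 e4 = y *\<^sub>R e3 - q2 *\<^sub>R e1)"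

definition brackets_U3 :: "('a::real_vector \<Rightarrow> 'a \<Rightarrow> 'a) \<Rightarrow> 'a \<Rightarrow> 'a \<Rightarrow> 'a \<Rightarrow> 'a \<Rightarrow> bool" where
  "brackets_U3 br e1 e2 e3 e4 \<longleftrightarrow> (\<exists>b1 b2 p q r :: real.
     br e1 e2 = 0 \<and> br e1 e3 = 0 \<and> br e2 e3 = 0 \<and>
     br e3 e4 = b1 *\<^sub>R e1 + b2 *\<^sub>R e2 \<and>
     br e4 e1 = p *\<^sub>R e1 + r *\<^sub>R e2 \<and>
     br e4 e2 = q *\<^sub>R e1 - p *\<^sub>R e2 \<and>
     \<bar>p\<^sup>2 + q * r\<bar> \<in> {0, 1})"

lemma bracket_plane_change:
  assumes "lie_algebra br"
  shows "br (A *\<^sub>R e1 + B *\<^sub>R e2) (C *\<^sub>R e1 + D *\<^sub>R e2) = (A * D - B * C) *\<^sub>R br e1 e2"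
  using lie_algebra_antisym[OF assms, of e2 e1] lie_algebra_self[OF assms]
  by (simp add: linear_eqs[OF lie_algebra_linear_left[OF assms]]
      linear_eqs[OF lie_algebra_linear_right[OF assms]] algebra_simps)

lemma scaled_rotation_eq_0:
  fixes p s th :: real
  assumes "- p / 2 + s * th = 0" and "- s / 2 - p * th = 0"
  shows "p = 0" "s = 0"
proof -
  have "p * (1 + 4 * th\<^sup>2) = (-2) * (- p / 2 + s * th) + (-4 * th) * (- s / 2 - p * th)"
    by (simp add: algebra_simps power2_eq_square)
  also have "\<dots> = 0" by (simp only: assms mult_zero_right add_0)
  moreover have "1 + 4 * th\<^sup>2 > 0" by (intro add_pos_nonneg) simp_all
  ultimately show "p = 0" by simp
  with assms(2) show "s = 0" by simp
qed

lemma exists_common_annihilator: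
  fixes p1 p2 s1 s2 t1 u1 :: real
  assumes "p2 * u1 = s2 * t1" and "p1 * s2 = p2 * s1" and "p1 * u1 = s1 * t1"
  obtains P Q where "P\<^sup>2 + Q\<^sup>2 \<noteq> 0" "P * p1 + Q * s1 = 0" "P * p2 + Q * s2 = 0" "P * t1 + Q * u1 = 0"
proof -
  \<comment> \<open>the vectors \<open>(p1, s1)\<close>, \<open>(p2, s2)\<close>, \<open>(t1, u1)\<close> are pairwise parallel: rotate a nonzero one by \<open>\<pi>/2\<close>\<close>
  consider "s1 \<noteq> 0 \<or> p1 \<noteq> 0" | "s1 = 0" "p1 = 0" "s2 \<noteq> 0 \<or> p2 \<noteq> 0"
    | "s1 = 0" "p1 = 0" "s2 = 0" "p2 = 0"
    by blast
  then show ?thesis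
  proof cases
    case 1
    then show ?thesis using assms by (intro that[of s1 "- p1"]) (auto simp: algebra_simps add_nonneg_eq_0_iff)
  next
    case 2
    then show ?thesis using assms by (intro that[of s2 "- p2"]) (auto simp: algebra_simps add_nonneg_eq_0_iff)
  next
    case 3
    show ?thesis
    proof (cases "u1 \<noteq> 0 \<or> t1 \<noteq> 0")
      case True
      then show ?thesis using 3 by (intro that[of u1 "- t1"]) (auto simp: algebra_simps add_nonneg_eq_0_iff)
    next
      case False
      then show ?thesis using 3 by (intro that[of 1 0]) auto
    qed
  qed
qed

lemma exists_scale_abs_01:
  fixes K :: real
  obtains t where "t \<noteq> 0" "\<bar>t\<^sup>2 * K\<bar> \<in> {0, 1}"
proof (cases "K = 0")
  case True
  then show ?thesis by (intro that[of 1]) simp_all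
next
  case False
  then have "(1 / sqrt \<bar>K\<bar>)\<^sup>2 = 1 / \<bar>K\<bar>" by (simp add: power_divide)
  then have "\<bar>(1 / sqrt \<bar>K\<bar>)\<^sup>2 * K\<bar> = 1" using False by (simp add: abs_mult)
  then show ?thesis using False by (intro that[of "1 / sqrt \<bar>K\<bar>"]) simp_all
qed

context gcs_frame
begin

lemma exists_U1_frame:
  assumes dim: "DIM('a) = 4" and unimod: "unimodular br"
    and h12: "br e1 e2 = a *\<^sub>R e1 + b *\<^sub>R e2" and ab: "a \<noteq> 0 \<or> b \<noteq> 0"
  obtains f1 f2 where "adapted_frame J R f1 f2 e3 e4 lam" "brackets_U1 br f1 f2 e3 e4"
proof -
  define n where "n = a\<^sup>2 + b\<^sup>2"
  have "n \<noteq> 0" using ab by (simp add: n_def add_nonneg_eq_0_iff)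
  \<comment> \<open>a unimodular change of basis of the plane making \<open>[f1, f2] = f1\<close>\<close>
  define f1 where "f1 = a *\<^sub>R e1 + b *\<^sub>R e2"
  define f2 where "f2 = (- b / n) *\<^sub>R e1 + (a / n) *\<^sub>R e2"
  have "a * (a / n) - b * (- b / n) = (a\<^sup>2 + b\<^sup>2) / n" by (simp add: add_divide_distrib power2_eq_square)
  then have det: "a * (a / n) - b * (- b / n) = 1" using \<open>n \<noteq> 0\<close> by (simp add: n_def)
  have frame_f: "adapted_frame J R f1 f2 e3 e4 lam"
    unfolding f1_def f2_def by (rule adapted_frame_change_plane[OF gcs_linear_J[OF gcs] frame det])
  have f12: "br f1 f2 = 1 *\<^sub>R f1 + 0 *\<^sub>R f2"
    unfolding f1_def f2_def by (subst bracket_plane_change[OF lie], subst det, subst h12) simp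
  obtain c1 c2 c3 c4 where "gcs_frame f1 f2 e3 e4 c1 c2 c3 c4 br J R \<sigma> lam"
    by (rule adapted_frame_gcs_frame[OF dim lie gcs frame_f])
  then interpret f: gcs_frame f1 f2 e3 e4 c1 c2 c3 c4 br J R \<sigma> lam .
  obtain p1 p2 s1 s2 th1 t1 u1 th2 m1 m2 where H:
    "br f1 e3 = p1 *\<^sub>R f1 + p2 *\<^sub>R f2 + (- 0 / 2) *\<^sub>R e3 + th1 *\<^sub>R e4"
    "br f1 e4 = s1 *\<^sub>R f1 + s2 *\<^sub>R f2 + (- th1) *\<^sub>R e3 + (- 0 / 2) *\<^sub>R e4"
    "br f2 e3 = t1 *\<^sub>R f1 + (- p1) *\<^sub>R f2 + (1 / 2) *\<^sub>R e3 + th2 *\<^sub>R e4"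
    "br f2 e4 = u1 *\<^sub>R f1 + (- s1) *\<^sub>R f2 + (- th2) *\<^sub>R e3 + (1 / 2) *\<^sub>R e4"
    "br e3 e4 = m1 *\<^sub>R f1 + m2 *\<^sub>R f2"
    by (rule f.bracket_normal_form[OF unimod f12]) blast
  note jac = f.normal_form_jacobi[OF f12 H]
  have th1: "th1 = 0" using jac(1) by simp
  have p1: "p1 = 0" and s1: "s1 = 0" using scaled_rotation_eq_0[of p1 s1 th2] jac(2,4) th1 by simp_all
  have p2: "p2 = 0" and s2: "s2 = 0" using scaled_rotation_eq_0[of p2 s2 th2] jac(3,5) th1 by simp_all
  have "m1 = 0" "m2 = 0" using jac(6,8) p1 s1 p2 s2 by simp_all
  then have "brackets_U1 br f1 f2 e3 e4"
    unfolding brackets_U1_def using f12 H th1 p1 s1 p2 s2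
    by (intro exI[of _ "- th2"] exI[of _ "- t1"] exI[of _ "- u1"]) (simp add: algebra_simps)
  with frame_f show ?thesis by (rule that)
qed

lemma exists_U2_frame:
  assumes dim: "DIM('a) = 4" and unimod: "unimodular br"
    and h12: "br e1 e2 = 0" and h13: "br e1 e3 = p1 *\<^sub>R e1 + p2 *\<^sub>R e2 + th1 *\<^sub>R e4"
    and h23: "br e2 e3 = t1 *\<^sub>R e1 - p1 *\<^sub>R e2 + th2 *\<^sub>R e4" and th: "th1 \<noteq> 0 \<or> th2 \<noteq> 0"
  obtains f1 f2 where "adapted_frame J R f1 f2 e3 e4 lam" "brackets_U2 br f1 f2 e3 e4"
proof -
  define n where "n = th1\<^sup>2 + th2\<^sup>2"
  have "n \<noteq> 0" using th by (simp add: n_def add_nonneg_eq_0_iff)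
  \<comment> \<open>choose \<open>f1\<close> in the kernel of \<open>e\<^sup>4 \<circ> ad e3\<close> restricted to the plane, then normalise \<open>f2\<close>\<close>
  define f1 where "f1 = th2 *\<^sub>R e1 + (- th1) *\<^sub>R e2"
  define f2 where "f2 = (th1 / n) *\<^sub>R e1 + (th2 / n) *\<^sub>R e2"
  have "th2 * (th2 / n) - (- th1) * (th1 / n) = (th1\<^sup>2 + th2\<^sup>2) / n"
    by (simp add: add_divide_distrib power2_eq_square)
  then have det: "th2 * (th2 / n) - (- th1) * (th1 / n) = 1" using \<open>n \<noteq> 0\<close> by (simp add: n_def)
  have frame_f: "adapted_frame J R f1 f2 e3 e4 lam"
    unfolding f1_def f2_def by (rule adapted_frame_change_plane[OF gcs_linear_J[OF gcs] frame det])
  have f12: "br f1 f2 = 0 *\<^sub>R f1 + 0 *\<^sub>R f2"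
    unfolding f1_def f2_def by (subst bracket_plane_change[OF lie]) (simp add: h12)
  obtain c1 c2 c3 c4 where "gcs_frame f1 f2 e3 e4 c1 c2 c3 c4 br J R \<sigma> lam"
    by (rule adapted_frame_gcs_frame[OF dim lie gcs frame_f])
  then interpret f: gcs_frame f1 f2 e3 e4 c1 c2 c3 c4 br J R \<sigma> lam .
  obtain p1' p2' s1' s2' th1' t1' u1' th2' m1' m2' where H:
    "br f1 e3 = p1' *\<^sub>R f1 + p2' *\<^sub>R f2 + (- 0 / 2) *\<^sub>R e3 + th1' *\<^sub>R e4"
    "br f1 e4 = s1' *\<^sub>R f1 + s2' *\<^sub>R f2 + (- th1') *\<^sub>R e3 + (- 0 / 2) *\<^sub>R e4"
    "br f2 e3 = t1' *\<^sub>R f1 + (- p1') *\<^sub>R f2 + (0 / 2) *\<^sub>R e3 + th2' *\<^sub>R e4"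
    "br f2 e4 = u1' *\<^sub>R f1 + (- s1') *\<^sub>R f2 + (- th2') *\<^sub>R e3 + (0 / 2) *\<^sub>R e4"
    "br e3 e4 = m1' *\<^sub>R f1 + m2' *\<^sub>R f2"
    by (rule f.bracket_normal_form[OF unimod f12]) blast
  have d4f: "d4 f1 = 0" "d4 f2 = 0" by (simp_all add: f1_def f2_def)
  have "th1' = d4 (br f1 e3)" using H(1) d4f by simp
  also have "\<dots> = 0" unfolding f1_def using h13 h23 by simp
  finally have th1': "th1' = 0" .
  have "th2' = d4 (br f2 e3)" using H(3) d4f by simp
  also have "\<dots> = (th1 / n) * th1 + (th2 / n) * th2" unfolding f2_def using h13 h23 by simp
  also have "\<dots> = (th1\<^sup>2 + th2\<^sup>2) / n" by (simp add: add_divide_distrib power2_eq_square)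
  also have "\<dots> = 1" using \<open>n \<noteq> 0\<close> by (simp add: n_def)
  finally have th2': "th2' = 1" .
  note jac = f.normal_form_jacobi[OF f12 H[unfolded th1' th2']]
  have "s1' = 0" "s2' = 0" "p1' = 0" "p2' = 0" using jac(2-5) by simp_all
  then have "brackets_U2 br f1 f2 e3 e4"
    unfolding brackets_U2_def using f12 H th1' th2'
    by (intro exI[of _ "- 1"] exI[of _ "- t1'"] exI[of _ "- u1'"] exI[of _ m1'] exI[of _ m2'])
      (simp add: algebra_simps)
  with frame_f show ?thesis by (rule that)
qed

lemma exists_U3_frame:
  assumes h12: "br e1 e2 = 0"
    and h13: "br e1 e3 = p1 *\<^sub>R e1 + p2 *\<^sub>R e2" and h14: "br e1 e4 = s1 *\<^sub>R e1 + s2 *\<^sub>R e2"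
    and h23: "br e2 e3 = t1 *\<^sub>R e1 - p1 *\<^sub>R e2" and h24: "br e2 e4 = u1 *\<^sub>R e1 - s1 *\<^sub>R e2"
    and h34: "br e3 e4 = m1 *\<^sub>R e1 + m2 *\<^sub>R e2"
  obtains f3 f4 where "adapted_frame J R e1 e2 f3 f4 lam" "brackets_U3 br e1 e2 f3 f4"
proof -
  have "br e1 e2 = 0 *\<^sub>R e1 + 0 *\<^sub>R e2"
    "br e1 e3 = p1 *\<^sub>R e1 + p2 *\<^sub>R e2 + (- 0 / 2) *\<^sub>R e3 + 0 *\<^sub>R e4"
    "br e1 e4 = s1 *\<^sub>R e1 + s2 *\<^sub>R e2 + (- 0) *\<^sub>R e3 + (- 0 / 2) *\<^sub>R e4"
    "br e2 e3 = t1 *\<^sub>R e1 + (- p1) *\<^sub>R e2 + (0 / 2) *\<^sub>R e3 + 0 *\<^sub>R e4"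
    "br e2 e4 = u1 *\<^sub>R e1 + (- s1) *\<^sub>R e2 + (- 0) *\<^sub>R e3 + (0 / 2) *\<^sub>R e4"
    using h12 h13 h14 h23 h24 by simp_all
  note jac = normal_form_jacobi[OF this h34]
  have "p2 * u1 = s2 * t1" "p1 * s2 = p2 * s1" "p1 * u1 = s1 * t1"
    using jac(6-8) by simp_all
  \<comment> \<open>rotate the second plane so that its first vector commutes with the first plane \<dots>\<close>
  then obtain P0 Q0 where PQ0: "P0\<^sup>2 + Q0\<^sup>2 \<noteq> 0"
    "P0 * p1 + Q0 * s1 = 0" "P0 * p2 + Q0 * s2 = 0" "P0 * t1 + Q0 * u1 = 0"
    by (rule exists_common_annihilator)
  \<comment> \<open>\<dots> and rescale it, which multiplies \<open>p\<^sup>2 + q r\<close> by the square of the scale\<close>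
  obtain t where "t \<noteq> 0"
    and t: "\<bar>t\<^sup>2 * ((Q0 * p1 - P0 * s1)\<^sup>2 + (Q0 * t1 - P0 * u1) * (Q0 * p2 - P0 * s2))\<bar> \<in> {0, 1}"
    by (rule exists_scale_abs_01)
  define P where "P = t * P0"
  define Q where "Q = t * Q0"
  have PQ: "P\<^sup>2 + Q\<^sup>2 \<noteq> 0" "P * p1 + Q * s1 = 0" "P * p2 + Q * s2 = 0" "P * t1 + Q * u1 = 0"
    using PQ0 \<open>t \<noteq> 0\<close>
    by (simp_all add: P_def Q_def power_mult_distrib mult.assoc flip: distrib_left)
  have inv: "\<bar>(Q * p1 - P * s1)\<^sup>2 + (Q * t1 - P * u1) * (Q * p2 - P * s2)\<bar> \<in> {0, 1}"
    using t by (simp add: P_def Q_def algebra_simps power2_eq_square)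
  have "adapted_frame J R e1 e2 (P *\<^sub>R e3 + Q *\<^sub>R e4) (P *\<^sub>R e4 - Q *\<^sub>R e3) lam"
    by (rule adapted_frame_rotate[OF gcs_linear_J[OF gcs] frame PQ(1)])
  moreover have "brackets_U3 br e1 e2 (P *\<^sub>R e3 + Q *\<^sub>R e4) (P *\<^sub>R e4 - Q *\<^sub>R e3)"
    unfolding brackets_U3_def
    using rotated_brackets[OF h13 h14 h23 h24 h34, of P Q] h12 PQ(2-4) inv by auto
  ultimately show ?thesis by (rule that)
qed

end

lemma exists_adapted_frame_U123:
  fixes br :: "'a::euclidean_space \<Rightarrow> 'a \<Rightarrow> 'a"
  assumes dim: "DIM('a) = 4" and lie: "lie_algebra br" and unimod: "unimodular br"
    and gcs: "gen_complex_structure br J R \<sigma>" and rank: "rank_R R = 2"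
  obtains e1 e2 e3 e4 lam where "adapted_frame J R e1 e2 e3 e4 lam"
    "brackets_U1 br e1 e2 e3 e4 \<or> brackets_U2 br e1 e2 e3 e4 \<or> brackets_U3 br e1 e2 e3 e4"
proof -
  obtain e1 e2 e3 e4 lam where frame: "adapted_frame J R e1 e2 e3 e4 lam"
    by (rule adapted_frame_exists[OF dim gcs rank])
  obtain d1 d2 d3 d4 where "gcs_frame e1 e2 e3 e4 d1 d2 d3 d4 br J R \<sigma> lam"
    by (rule adapted_frame_gcs_frame[OF dim lie gcs frame])
  then interpret gcs_frame e1 e2 e3 e4 d1 d2 d3 d4 br J R \<sigma> lam .
  obtain a b where h12: "br e1 e2 = a *\<^sub>R e1 + b *\<^sub>R e2"
    by (rule bracket_e1e2_in_plane)
  obtain p1 p2 s1 s2 th1 t1 u1 th2 m1 m2 where H: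
    "br e1 e3 = p1 *\<^sub>R e1 + p2 *\<^sub>R e2 + (- b / 2) *\<^sub>R e3 + th1 *\<^sub>R e4"
    "br e1 e4 = s1 *\<^sub>R e1 + s2 *\<^sub>R e2 + (- th1) *\<^sub>R e3 + (- b / 2) *\<^sub>R e4"
    "br e2 e3 = t1 *\<^sub>R e1 + (- p1) *\<^sub>R e2 + (a / 2) *\<^sub>R e3 + th2 *\<^sub>R e4"
    "br e2 e4 = u1 *\<^sub>R e1 + (- s1) *\<^sub>R e2 + (- th2) *\<^sub>R e3 + (a / 2) *\<^sub>R e4"
    "br e3 e4 = m1 *\<^sub>R e1 + m2 *\<^sub>R e2"
    by (rule bracket_normal_form[OF unimod h12]) blast
  consider "a \<noteq> 0 \<or> b \<noteq> 0" | "a = 0" "b = 0" "th1 \<noteq> 0 \<or> th2 \<noteq> 0" | "a = 0" "b = 0" "th1 = 0" "th2 = 0"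
    by blast
  then show ?thesis
  proof cases
    case 1
    obtain f1 f2 where "adapted_frame J R f1 f2 e3 e4 lam" "brackets_U1 br f1 f2 e3 e4"
      by (rule exists_U1_frame[OF dim unimod h12 1])
    then show ?thesis using that by blast
  next
    case 2
    obtain f1 f2 where "adapted_frame J R f1 f2 e3 e4 lam" "brackets_U2 br f1 f2 e3 e4"
      by (rule exists_U2_frame[OF dim unimod, of p1 p2 th1 t1 th2]) (use h12 H 2 in simp_all)
    then show ?thesis using that by blast
  next
    case 3
    obtain f3 f4 where "adapted_frame J R e1 e2 f3 f4 lam" "brackets_U3 br e1 e2 f3 f4"
      by (rule exists_U3_frame[of p1 p2 s1 s2 t1 u1 m1 m2]) (use h12 H 3 in simp_all)
    then show ?thesis using that by blast
  qed
qed

theorem theorem2p1: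
  fixes br :: "'a::euclidean_space \<Rightarrow> 'a \<Rightarrow> 'a"
    and J :: "'a \<Rightarrow> 'a" and R :: "('a \<Rightarrow> real) \<Rightarrow> 'a" and \<sigma> :: "'a \<Rightarrow> ('a \<Rightarrow> real)"
  assumes "DIM('a) = 4"
    and "lie_algebra br"
    and "unimodular br"
    and "gen_complex_structure br J R \<sigma>"
    and "rank_R R = 2"
  shows "\<exists>e1 e2 e3 e4 (lam::real).
    distinct [e1, e2, e3, e4] \<and> independent {e1, e2, e3, e4} \<and> span {e1, e2, e3, e4} = UNIV \<and>
    J e1 = lam *\<^sub>R e1 \<and> J e2 = lam *\<^sub>R e2 \<and> J e3 = - e4 \<and> J e4 = e3 \<and>
    (\<forall>\<alpha>\<in>dual_space. R \<alpha> = \<alpha> e1 *\<^sub>R e2 - \<alpha> e2 *\<^sub>R e1) \<and>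
    (\<forall>i<4. \<forall>j<4. \<sigma> ([e1, e2, e3, e4] ! i) ([e1, e2, e3, e4] ! j) =
        (1 + lam\<^sup>2) * (if i = 0 \<and> j = 1 then 1 else if i = 1 \<and> j = 0 then -1 else 0)) \<and>
    ((\<exists>y q1 q2 :: real.
        br e1 e2 = e1 \<and> br e1 e3 = 0 \<and> br e1 e4 = 0 \<and>
        br e2 e3 = (1/2) *\<^sub>R e3 - y *\<^sub>R e4 - q1 *\<^sub>R e1 \<and>
        br e2 e4 = y *\<^sub>R e3 + (1/2) *\<^sub>R e4 - q2 *\<^sub>R e1 \<and>
        br e3 e4 = 0)
     \<or> (\<exists>y q1 q2 b1 b2 :: real.
        br e1 e2 = 0 \<and> br e1 e3 = 0 \<and> br e1 e4 = 0 \<and>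
        br e3 e4 = b1 *\<^sub>R e1 + b2 *\<^sub>R e2 \<and>
        br e2 e3 = - (y *\<^sub>R e4) - q1 *\<^sub>R e1 \<and>
        br e2 e4 = y *\<^sub>R e3 - q2 *\<^sub>R e1)
     \<or> (\<exists>b1 b2 p q r :: real.
        br e1 e2 = 0 \<and> br e1 e3 = 0 \<and> br e2 e3 = 0 \<and>
        br e3 e4 = b1 *\<^sub>R e1 + b2 *\<^sub>R e2 \<and>
        br e4 e1 = p *\<^sub>R e1 + r *\<^sub>R e2 \<and>
        br e4 e2 = q *\<^sub>R e1 - p *\<^sub>R e2 \<and>
        \<bar>p\<^sup>2 + q * r\<bar> \<in> {0, 1}))"
proof -
  obtain e1 e2 e3 e4 lam where frame: "adapted_frame J R e1 e2 e3 e4 lam"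
    and U: "brackets_U1 br e1 e2 e3 e4 \<or> brackets_U2 br e1 e2 e3 e4 \<or> brackets_U3 br e1 e2 e3 e4"
    by (rule exists_adapted_frame_U123[OF assms])
  have ind: "independent4 e1 e2 e3 e4"
    and J: "J e1 = lam *\<^sub>R e1" "J e2 = lam *\<^sub>R e2" "J e3 = - e4" "J e4 = e3"
    and R: "\<forall>\<alpha>\<in>dual_space. R \<alpha> = \<alpha> e1 *\<^sub>R e2 - \<alpha> e2 *\<^sub>R e1"
    using frame by (auto simp: adapted_frame_def dual_space_def)
  show ?thesis
    by (intro exI[of _ e1] exI[of _ e2] exI[of _ e3] exI[of _ e4] exI[of _ lam])
      (use independent4_distinct[OF ind] independent4_independent[OF ind]
        independent4_span_UNIV[OF assms(1) ind] adapted_frame_sigma[OF assms(4) frame] J R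
        U[unfolded brackets_U1_def brackets_U2_def brackets_U3_def] in blast)
qed

end
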